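(* Let $k$ be a field, $\Gamma=(V,E)$ a finite connected quiver, and $I\subseteq R^2$ a two-sided ideal of $k\Gamma$ such that $k\Gamma/I$ is finite dimensional. With $\mathscr{Q}$, $\mathscr{Q}_C$ and $\mathfrak{B}_2$ as in the context, $$\dim_k H^1(k\Gamma,k\Gamma/I)=|\mathfrak{B}_2|+\dim_k Z(k\Gamma/I)-|\mathscr{Q}_C|.$$
   Context: For a path $p$, $t(p),h(p)$ are its start and end vertex; paths multiply by left-to-right concatenation (product $0$ if they do not concatenate). $R$ is the ideal generated by $E$, $\overline{x}=x+I$. A differential operator from $k\Gamma$ to $k\Gamma/I$ is a $k$-linear map with $D(xy)=D(x)\overline{y}+\overline{x}D(y)$; inner ones are those of the form $x\mapsto m\overline{x}-\overline{x}m$, $m\in k\Gamma/I$; $H^1(k\Gamma,k\Gamma/I)$ is the quotient of the space of differential operators by the inner ones. $Z(k\Gamma/I)$ is the center of $k\Gamma/I$. $\mathscr{Q}$ is a fixed $k$-basis of $k\Gamma/I$ consisting of residue classes of paths and containing the classes of all vertices and arrows; for $\overline{s}\in\mathscr{Q}$, $t(\overline{s}),h(\overline{s})$ are the start/end vertex of any representing path (well defined). $\mathscr{Q}_C=\{\overline{q}\in\mathscr{Q}\mid t(\overline{q})=h(\overline{q})\}$. $\mathfrak{B}_2=\{D_{r,\overline{s}}\mid r\in E,\ \overline{s}\in\mathscr{Q},\ t(r)=t(\overline{s}),\ h(r)=h(\overline{s})\}$, where $D_{r,\overline{s}}$ is the unique differential operator $k\Gamma\to k\Gamma/I$ with $D_{r,\overline{s}}(r)=\overline{s}$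 and vanishing on all other arrows and all vertices. *)

theory Defs
  imports Main
begin

text \<open>Quiver: vertex set V, arrow set E, start map s (= t in the paper), end map h.
  A path is a pair (start vertex, list of arrows), read left to right; the trivial
  path at v is (v, []) and the arrow e is the path (s e, [e]).\<close>

type_synonym ('v,'e) path = "'v \<times> 'e list"

definition valid_path :: "'v set \<Rightarrow> 'e set \<Rightarrow> ('e \<Rightarrow> 'v) \<Rightarrow> ('e \<Rightarrow> 'v) \<Rightarrow> ('v,'e) path \<Rightarrow> bool" where
  "valid_path V E s h p \<longleftrightarrow> fst p \<in> V \<and> set (snd p) \<subseteq> E
     \<and> (snd p \<noteq> [] \<longrightarrow> s (hd (snd p)) = fst p)
     \<and> (\<forall>i. Suc i < length (snd p) \<longrightarrow> h (snd p ! i) = s (snd p ! Suc i))"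

definition path_start :: "('v,'e) path \<Rightarrow> 'v" where
  "path_start p = fst p"

definition path_end :: "('e \<Rightarrow> 'v) \<Rightarrow> ('v,'e) path \<Rightarrow> 'v" where
  "path_end h p = (if snd p = [] then fst p else h (last (snd p)))"

definition path_cat :: "('e \<Rightarrow> 'v) \<Rightarrow> ('v,'e) path \<Rightarrow> ('v,'e) path \<Rightarrow> ('v,'e) path option" where
  "path_cat h p q = (if path_end h p = fst q then Some (fst p, snd p @ snd q) else None)"

definition quiver_connected :: "'v set \<Rightarrow> 'e set \<Rightarrow> ('e \<Rightarrow> 'v) \<Rightarrow> ('e \<Rightarrow> 'v) \<Rightarrow> bool" where
  "quiver_connected V E s h \<longleftrightarrow>
     (\<forall>u\<in>V. \<forall>w\<in>V. (u, w) \<in> ({(s e, h e) | e. e \<in> E} \<union> {(h e, s e) | e. e \<in> E})\<^sup>*)"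

definition pathalg :: "'v set \<Rightarrow> 'e set \<Rightarrow> ('e \<Rightarrow> 'v) \<Rightarrow> ('e \<Rightarrow> 'v) \<Rightarrow> (('v,'e) path \<Rightarrow> 'k::field) set" where
  "pathalg V E s h = {f. finite {p. f p \<noteq> 0} \<and> (\<forall>p. f p \<noteq> 0 \<longrightarrow> valid_path V E s h p)}"

definition padd :: "('a \<Rightarrow> 'k::field) \<Rightarrow> ('a \<Rightarrow> 'k) \<Rightarrow> 'a \<Rightarrow> 'k" where
  "padd f g = (\<lambda>p. f p + g p)"

definition psub :: "('a \<Rightarrow> 'k::field) \<Rightarrow> ('a \<Rightarrow> 'k) \<Rightarrow> 'a \<Rightarrow> 'k" where
  "psub f g = (\<lambda>p. f p - g p)"

definition psc :: "'k::field \<Rightarrow> ('a \<Rightarrow> 'k) \<Rightarrow> 'a \<Rightarrow> 'k" where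
  "psc c f = (\<lambda>p. c * f p)"

definition pzero :: "'a \<Rightarrow> 'k::field" where
  "pzero = (\<lambda>p. 0)"

definition ind :: "'a \<Rightarrow> 'a \<Rightarrow> 'k::field" where
  "ind q = (\<lambda>p. if p = q then 1 else 0)"

definition pmul :: "('e \<Rightarrow> 'v) \<Rightarrow> (('v,'e) path \<Rightarrow> 'k::field) \<Rightarrow> (('v,'e) path \<Rightarrow> 'k) \<Rightarrow> ('v,'e) path \<Rightarrow> 'k" where
  "pmul h f g = (\<lambda>r. \<Sum>p\<in>{p. f p \<noteq> 0}. \<Sum>q\<in>{q. g q \<noteq> 0}.
       (if path_cat h p q = Some r then f p * g q else 0))"

definition two_sided_ideal :: "'v set \<Rightarrow> 'e set \<Rightarrow> ('e \<Rightarrow> 'v) \<Rightarrow> ('e \<Rightarrow> 'v) \<Rightarrow> (('v,'e) path \<Rightarrow> 'k::field) set \<Rightarrow> bool" where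
  "two_sided_ideal V E s h I \<longleftrightarrow> I \<subseteq> pathalg V E s h \<and> pzero \<in> I
     \<and> (\<forall>x\<in>I. \<forall>y\<in>I. padd x y \<in> I) \<and> (\<forall>c. \<forall>x\<in>I. psc c x \<in> I)
     \<and> (\<forall>x\<in>I. \<forall>a\<in>pathalg V E s h. pmul h a x \<in> I \<and> pmul h x a \<in> I)"

definition arrow_ideal_sq :: "'v set \<Rightarrow> 'e set \<Rightarrow> ('e \<Rightarrow> 'v) \<Rightarrow> ('e \<Rightarrow> 'v) \<Rightarrow> (('v,'e) path \<Rightarrow> 'k::field) set" where
  "arrow_ideal_sq V E s h = {f \<in> pathalg V E s h. \<forall>p. f p \<noteq> 0 \<longrightarrow> 2 \<le> length (snd p)}"

definition quot_fin_dim :: "'v set \<Rightarrow> 'e set \<Rightarrow> ('e \<Rightarrow> 'v) \<Rightarrow> ('e \<Rightarrow> 'v) \<Rightarrow> (('v,'e) path \<Rightarrow> 'k::field) set \<Rightarrow> bool" where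
  "quot_fin_dim V E s h I \<longleftrightarrow> (\<exists>B. finite B \<and> B \<subseteq> pathalg V E s h \<and>
     (\<forall>x\<in>pathalg V E s h. \<exists>c. psub x (\<lambda>r. \<Sum>b\<in>B. c b * b r) \<in> I))"

text \<open>Q (a set of paths) represents a k-basis of k Gamma / I consisting of path classes,
  containing the classes of all vertices and arrows.\<close>

definition path_class_basis :: "'v set \<Rightarrow> 'e set \<Rightarrow> ('e \<Rightarrow> 'v) \<Rightarrow> ('e \<Rightarrow> 'v) \<Rightarrow> (('v,'e) path \<Rightarrow> 'k::field) set \<Rightarrow> ('v,'e) path set \<Rightarrow> bool" where
  "path_class_basis V E s h I Q \<longleftrightarrow> finite Q \<and> (\<forall>q\<in>Q. valid_path V E s h q)
     \<and> (\<forall>x\<in>pathalg V E s h. \<exists>c. psub x (\<lambda>r. \<Sum>q\<in>Q. c q * ind q r) \<in> I)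
     \<and> (\<forall>c. (\<lambda>r. \<Sum>q\<in>Q. c q * ind q r) \<in> I \<longrightarrow> (\<forall>q\<in>Q. c q = (0::'k)))
     \<and> (\<forall>v\<in>V. \<exists>q\<in>Q. psub (ind q) (ind (v, [])) \<in> I)
     \<and> (\<forall>e\<in>E. \<exists>q\<in>Q. psub (ind q) (ind (s e, [e])) \<in> I)"

text \<open>Differential operators k Gamma -> k Gamma / I, represented by representative-valued maps
  (values in k Gamma, identities required modulo I).\<close>

definition diff_op :: "'v set \<Rightarrow> 'e set \<Rightarrow> ('e \<Rightarrow> 'v) \<Rightarrow> ('e \<Rightarrow> 'v) \<Rightarrow> (('v,'e) path \<Rightarrow> 'k::field) set
     \<Rightarrow> ((('v,'e) path \<Rightarrow> 'k) \<Rightarrow> (('v,'e) path \<Rightarrow> 'k)) \<Rightarrow> bool" where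
  "diff_op V E s h I D \<longleftrightarrow>
     (\<forall>x\<in>pathalg V E s h. D x \<in> pathalg V E s h)
     \<and> (\<forall>x\<in>pathalg V E s h. \<forall>y\<in>pathalg V E s h. psub (D (padd x y)) (padd (D x) (D y)) \<in> I)
     \<and> (\<forall>c. \<forall>x\<in>pathalg V E s h. psub (D (psc c x)) (psc c (D x)) \<in> I)
     \<and> (\<forall>x\<in>pathalg V E s h. \<forall>y\<in>pathalg V E s h.
          psub (D (pmul h x y)) (padd (pmul h (D x) y) (pmul h x (D y))) \<in> I)"

definition Der :: "'v set \<Rightarrow> 'e set \<Rightarrow> ('e \<Rightarrow> 'v) \<Rightarrow> ('e \<Rightarrow> 'v) \<Rightarrow> (('v,'e) path \<Rightarrow> 'k::field) set
     \<Rightarrow> ((('v,'e) path \<Rightarrow> 'k) \<Rightarrow> (('v,'e) path \<Rightarrow> 'k)) set" where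
  "Der V E s h I = {D. diff_op V E s h I D}"

definition Inn :: "'v set \<Rightarrow> 'e set \<Rightarrow> ('e \<Rightarrow> 'v) \<Rightarrow> ('e \<Rightarrow> 'v) \<Rightarrow> (('v,'e) path \<Rightarrow> 'k::field) set
     \<Rightarrow> ((('v,'e) path \<Rightarrow> 'k) \<Rightarrow> (('v,'e) path \<Rightarrow> 'k)) set" where
  "Inn V E s h I = {D \<in> Der V E s h I. \<exists>m\<in>pathalg V E s h. \<forall>x\<in>pathalg V E s h.
       psub (D x) (psub (pmul h m x) (pmul h x m)) \<in> I}"

definition Dadd :: "('a \<Rightarrow> 'b \<Rightarrow> 'k::field) \<Rightarrow> ('a \<Rightarrow> 'b \<Rightarrow> 'k) \<Rightarrow> 'a \<Rightarrow> 'b \<Rightarrow> 'k" where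
  "Dadd D1 D2 = (\<lambda>x. padd (D1 x) (D2 x))"

definition Dsc :: "'k::field \<Rightarrow> ('a \<Rightarrow> 'b \<Rightarrow> 'k) \<Rightarrow> 'a \<Rightarrow> 'b \<Rightarrow> 'k" where
  "Dsc c D = (\<lambda>x. psc c (D x))"

definition Dzero :: "'a \<Rightarrow> 'b \<Rightarrow> 'k::field" where
  "Dzero = (\<lambda>x. pzero)"

definition center_rep :: "'v set \<Rightarrow> 'e set \<Rightarrow> ('e \<Rightarrow> 'v) \<Rightarrow> ('e \<Rightarrow> 'v) \<Rightarrow> (('v,'e) path \<Rightarrow> 'k::field) set
     \<Rightarrow> (('v,'e) path \<Rightarrow> 'k) set" where
  "center_rep V E s h I = {z \<in> pathalg V E s h. \<forall>y\<in>pathalg V E s h. psub (pmul h z y) (pmul h y z) \<in> I}"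

text \<open>Dimension of a quotient S/W of k-vector spaces (W subspace of S inside an ambient space
  with operations sc, ad, z): the largest number of elements of S that are linearly
  independent modulo W.\<close>

definition indep_mod :: "('k::field \<Rightarrow> 'x \<Rightarrow> 'x) \<Rightarrow> ('x \<Rightarrow> 'x \<Rightarrow> 'x) \<Rightarrow> 'x \<Rightarrow> 'x set \<Rightarrow> 'x list \<Rightarrow> bool" where
  "indep_mod sc ad z W xs \<longleftrightarrow>
     (\<forall>c::nat \<Rightarrow> 'k. foldr (\<lambda>i acc. ad (sc (c i) (xs ! i)) acc) [0..<length xs] z \<in> W
        \<longrightarrow> (\<forall>i<length xs. c i = 0))"

definition qdim :: "('k::field \<Rightarrow> 'x \<Rightarrow> 'x) \<Rightarrow> ('x \<Rightarrow> 'x \<Rightarrow> 'x) \<Rightarrow> 'x \<Rightarrow> 'x set \<Rightarrow> 'x set \<Rightarrow> nat" where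
  "qdim sc ad z S W = (GREATEST n. \<exists>xs. length xs = n \<and> set xs \<subseteq> S \<and> indep_mod sc ad z W xs)"

definition H1_dim :: "'v set \<Rightarrow> 'e set \<Rightarrow> ('e \<Rightarrow> 'v) \<Rightarrow> ('e \<Rightarrow> 'v) \<Rightarrow> (('v,'e) path \<Rightarrow> 'k::field) set \<Rightarrow> nat" where
  "H1_dim V E s h I = qdim (Dsc :: 'k \<Rightarrow> _) Dadd Dzero (Der V E s h I) (Inn V E s h I)"

definition center_dim :: "'v set \<Rightarrow> 'e set \<Rightarrow> ('e \<Rightarrow> 'v) \<Rightarrow> ('e \<Rightarrow> 'v) \<Rightarrow> (('v,'e) path \<Rightarrow> 'k::field) set \<Rightarrow> nat" where
  "center_dim V E s h I = qdim (psc :: 'k \<Rightarrow> _) padd pzero (center_rep V E s h I) I"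

text \<open>The operator D_{r,q}, as the set of all its representatives (one element of H^1-level
  operators, i.e. a class of Der modulo maps with values in I).\<close>

definition Dop :: "'v set \<Rightarrow> 'e set \<Rightarrow> ('e \<Rightarrow> 'v) \<Rightarrow> ('e \<Rightarrow> 'v) \<Rightarrow> (('v,'e) path \<Rightarrow> 'k::field) set
     \<Rightarrow> 'e \<Rightarrow> ('v,'e) path \<Rightarrow> ((('v,'e) path \<Rightarrow> 'k) \<Rightarrow> (('v,'e) path \<Rightarrow> 'k)) set" where
  "Dop V E s h I r q = {D \<in> Der V E s h I.
       psub (D (ind (s r, [r]))) (ind q) \<in> I
     \<and> (\<forall>e\<in>E. e \<noteq> r \<longrightarrow> D (ind (s e, [e])) \<in> I)
     \<and> (\<forall>v\<in>V. D (ind (v, [])) \<in> I)}"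

definition B2 :: "'v set \<Rightarrow> 'e set \<Rightarrow> ('e \<Rightarrow> 'v) \<Rightarrow> ('e \<Rightarrow> 'v) \<Rightarrow> (('v,'e) path \<Rightarrow> 'k::field) set
     \<Rightarrow> ('v,'e) path set \<Rightarrow> ((('v,'e) path \<Rightarrow> 'k) \<Rightarrow> (('v,'e) path \<Rightarrow> 'k)) set set" where
  "B2 V E s h I Q = (\<lambda>(r, q). Dop V E s h I r q) `
     {(r, q). r \<in> E \<and> q \<in> Q \<and> s r = path_start q \<and> h r = path_end h q}"

definition QC :: "('e \<Rightarrow> 'v) \<Rightarrow> ('v,'e) path set \<Rightarrow> ('v,'e) path set" where
  "QC h Q = {q \<in> Q. path_start q = path_end h q}"

end

theory Submission
  imports Defs "HOL-Library.Function_Algebras" "HOL.Vector_Spaces"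
begin

text \<open>Derivations k Gamma \<rightarrow> k Gamma/I are represented by k Gamma-valued maps, so all spaces of
  derivations are taken modulo the derivations with values in I. Modulo these, a derivation is
  determined by its values on vertices and arrows. Subtracting a combination of inner derivations
  ad q, for the basis paths q with distinct endpoints, makes it vanish on the vertices; it then
  sends each arrow r to a combination of basis paths parallel to r, i.e. it is a combination of
  the D_{r,q}. The D_{r,q} and these ad q are independent, so the derivations have dimension
  |B_2| + |Q| - |Q_C| modulo I-valued maps. The inner ones form the image of ad, whose kernel
  modulo I-valued maps is the centre, so they have dimension |Q| - dim Z(k Gamma/I); the
  difference is the claimed dimension of H^1.\<close>

section \<open>Dimension of a quotient of vector spaces\<close>

lemma foldr_add_eq_sum_list:
  "foldr (\<lambda>i acc. f i + acc) xs a = sum_list (map f xs) + (a :: 'a :: monoid_add)"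
  by (induct xs) (auto simp: add.assoc)

lemma foldr_add_upt_eq_sum:
  "foldr (\<lambda>i acc. f i + acc) [0..<n] 0 = (\<Sum>i<n. f i :: 'a :: comm_monoid_add)"
  using foldr_add_eq_sum_list[of f "[0..<n]" 0]
  by (simp add: sum_set_upt_conv_sum_list_nat[symmetric] atLeast0LessThan)

lemma sum_lessThan_add_split:
  "(\<Sum>i<m + (n::nat). f i) = (\<Sum>i<m. f i) + (\<Sum>j<n. f (m + j) :: 'a :: comm_monoid_add)"
  by (induct n) (auto simp: add.assoc)

context vector_space
begin

definition lin_comb :: "(nat \<Rightarrow> 'a) \<Rightarrow> 'b list \<Rightarrow> 'b" where
  "lin_comb c xs = (\<Sum>i<length xs. c i *s xs ! i)"

definition independent_mod :: "'b set \<Rightarrow> 'b list \<Rightarrow> bool" where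
  "independent_mod W xs \<longleftrightarrow> (\<forall>c. lin_comb c xs \<in> W \<longrightarrow> (\<forall>i<length xs. c i = 0))"

definition span_mod :: "'b set \<Rightarrow> 'b set \<Rightarrow> 'b set" where
  "span_mod B W = {x. \<exists>a\<in>span B. x - a \<in> W}"

lemma indep_mod_iff_independent_mod: "indep_mod scale (+) 0 W xs \<longleftrightarrow> independent_mod W xs"
  unfolding indep_mod_def independent_mod_def lin_comb_def foldr_add_upt_eq_sum ..

lemma independent_modD:
  "independent_mod W xs \<Longrightarrow> lin_comb c xs \<in> W \<Longrightarrow> i < length xs \<Longrightarrow> c i = 0"
  unfolding independent_mod_def by blast

lemma qdim_eq_Greatest:
  "qdim scale (+) 0 S W = (GREATEST n. \<exists>xs. length xs = n \<and> set xs \<subseteq> S \<and> independent_mod W xs)"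
  unfolding qdim_def indep_mod_iff_independent_mod ..

lemma lin_comb_in_span: "lin_comb c xs \<in> span (set xs)"
  unfolding lin_comb_def by (intro span_sum span_scale span_base) auto

lemma lin_comb_append: "lin_comb c (xs @ ys) = lin_comb c xs + lin_comb (\<lambda>j. c (length xs + j)) ys"
  unfolding lin_comb_def by (simp add: sum_lessThan_add_split nth_append)

lemma span_mod_mono: "W0 \<subseteq> W \<Longrightarrow> span_mod B W0 \<subseteq> span_mod B W"
  unfolding span_mod_def by auto

text \<open>Choosing representatives in span B of the members of an independent list gives an
  injective family that is independent in the ordinary sense, so its size is at most card B.\<close>

lemma independent_mod_length_le:
  assumes W: "subspace W" and B: "finite B" and S: "S \<subseteq> span_mod B W"
    and xs: "set xs \<subseteq> S" and ind: "independent_mod W xs"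
  shows "length xs \<le> card B"
proof -
  let ?n = "length xs"
  have "\<forall>i<?n. \<exists>b\<in>span B. xs!i - b \<in> W" using xs S unfolding span_mod_def
    by (auto dest!: nth_mem)
  then obtain f where f: "\<And>i. i < ?n \<Longrightarrow> f i \<in> span B \<and> xs!i - f i \<in> W" by metis
  have inj: "inj_on f {..<?n}"
  proof (rule inj_onI, rule ccontr)
    fix i j assume i: "i \<in> {..<?n}" and j: "j \<in> {..<?n}" and eq: "f i = f j" and ne: "i \<noteq> j"
    define c where "c k = (if k = i then 1 else if k = j then -1 else (0::'a))" for k
    have ck: "c k *s xs!k = (if k = i then xs!k else 0) - (if k = j then xs!k else 0)" for k
      using ne by (auto simp: c_def)
    have "lin_comb c xs = (xs!i - f i) - (xs!j - f j)"
      unfolding lin_comb_def ck sum_subtractf using i j eq by simp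
    also have "\<dots> \<in> W" using f i j W by (auto intro: subspace_diff)
    finally have "c i = 0" using independent_modD[OF ind] i by simp
    then show False by (simp add: c_def)
  qed
  have "independent (f ` {..<?n})"
  proof
    assume "dependent (f ` {..<?n})"
    then obtain t u where t: "finite t" "t \<subseteq> f ` {..<?n}" "(\<Sum>v\<in>t. u v *s v) = 0"
      and v: "\<exists>v\<in>t. u v \<noteq> 0" unfolding dependent_explicit by blast
    define c where "c k = (if f k \<in> t then u (f k) else 0)" for k
    have "(\<Sum>k<?n. c k *s f k) = (\<Sum>k\<in>{k\<in>{..<?n}. f k \<in> t}. u (f k) *s f k)"
      by (rule sum.mono_neutral_cong_right) (auto simp: c_def)
    also have "\<dots> = (\<Sum>v\<in>f ` {k\<in>{..<?n}. f k \<in> t}. u v *s v)"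
      by (subst sum.reindex) (auto intro: inj_on_subset[OF inj])
    also have "f ` {k\<in>{..<?n}. f k \<in> t} = t" using t(2) by auto
    finally have "(\<Sum>k<?n. c k *s f k) = 0" using t(3) by simp
    moreover have "(\<Sum>k<?n. c k *s (xs!k - f k)) \<in> W"
      using f by (auto intro!: subspace_sum[OF W] subspace_scale[OF W])
    moreover have "c k *s xs!k = c k *s f k + c k *s (xs!k - f k)" for k
      by (simp add: scale_right_distrib[symmetric])
    ultimately have "lin_comb c xs \<in> W" unfolding lin_comb_def by (simp add: sum.distrib)
    then have c0: "\<forall>k<?n. c k = 0" using independent_modD[OF ind] by simp
    from v obtain w where w: "w \<in> t" "u w \<noteq> 0" by blast
    then obtain k where "k < ?n" "w = f k" using t(2) by auto
    then show False using c0 w by (auto simp: c_def)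
  qed
  moreover have "f ` {..<?n} \<subseteq> span B" using f by auto
  ultimately have "card (f ` {..<?n}) \<le> card B" using independent_span_bound[OF B] by blast
  then show ?thesis using card_image[OF inj] by simp
qed

lemma qdim_eqI:
  assumes W: "subspace W" and bs: "set bs \<subseteq> S" and ind: "independent_mod W bs"
    and sp: "S \<subseteq> span_mod (set bs) W"
  shows "qdim scale (+) 0 S W = length bs"
  unfolding qdim_eq_Greatest
proof (rule Greatest_equality)
  show "\<exists>xs. length xs = length bs \<and> set xs \<subseteq> S \<and> independent_mod W xs" using bs ind by blast
  fix n assume "\<exists>xs. length xs = n \<and> set xs \<subseteq> S \<and> independent_mod W xs"
  then obtain xs where xs: "length xs = n" "set xs \<subseteq> S" "independent_mod W xs" by blast
  have "n \<le> card (set bs)" using independent_mod_length_le[OF W finite_set sp xs(2,3)] xs(1) by simp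
  also have "\<dots> \<le> length bs" by (rule card_length)
  finally show "n \<le> length bs" .
qed

lemma independent_mod_snoc:
  assumes W: "subspace W" and ind: "independent_mod W xs" and x: "x \<notin> span_mod (set xs) W"
  shows "independent_mod W (xs @ [x])"
  unfolding independent_mod_def
proof (rule allI, rule impI)
  fix c assume cW: "lin_comb c (xs @ [x]) \<in> W"
  have lc: "lin_comb c (xs @ [x]) = lin_comb c xs + c (length xs) *s x"
    unfolding lin_comb_append by (simp add: lin_comb_def)
  have cn: "c (length xs) = 0"
  proof (rule ccontr)
    assume cne: "c (length xs) \<noteq> 0"
    have "x - (- (inverse (c (length xs)) *s lin_comb c xs))
        = inverse (c (length xs)) *s lin_comb c (xs @ [x])"
      unfolding lc using cne by (simp add: scale_right_distrib)
    also have "\<dots> \<in> W" using cW W by (rule subspace_scale[rotated])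
    finally have "x \<in> span_mod (set xs) W"
      unfolding span_mod_def using lin_comb_in_span by (blast intro: span_neg span_scale)
    with x show False by simp
  qed
  then have "lin_comb c xs \<in> W" using cW lc by simp
  then have "\<forall>i<length xs. c i = 0" using independent_modD[OF ind] by blast
  then show "\<forall>i<length (xs @ [x]). c i = 0" using cn by (auto simp: less_Suc_eq)
qed

text \<open>A longest list independent modulo W spans S modulo W, since otherwise it could be
  extended by independent_mod_snoc.\<close>

lemma obtain_qdim_basis:
  assumes W: "subspace W" and B: "finite B" and S: "S \<subseteq> span_mod B W"
  obtains bs where "set bs \<subseteq> S" "independent_mod W bs" "length bs = qdim scale (+) 0 S W"
    "S \<subseteq> span_mod (set bs) W"
proof -
  let ?P = "\<lambda>n. \<exists>xs. length xs = n \<and> set xs \<subseteq> S \<and> independent_mod W xs"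
  have bound: "\<And>n. ?P n \<Longrightarrow> n \<le> card B" using independent_mod_length_le[OF W B S] by blast
  have "?P 0" by (rule exI[of _ "[]"]) (auto simp: independent_mod_def)
  then have "?P (GREATEST n. ?P n)" by (rule GreatestI_nat[OF _ bound])
  then obtain xs where xs: "length xs = qdim scale (+) 0 S W" "set xs \<subseteq> S" "independent_mod W xs"
    unfolding qdim_eq_Greatest by blast
  have "S \<subseteq> span_mod (set xs) W"
  proof (rule subsetI, rule ccontr)
    fix x assume x: "x \<in> S" and "x \<notin> span_mod (set xs) W"
    then have "?P (Suc (length xs))"
      using independent_mod_snoc[OF W xs(3)] xs(2) by (intro exI[of _ "xs @ [x]"]) simp
    then have "Suc (length xs) \<le> (GREATEST n. ?P n)" by (rule Greatest_le_nat[OF _ bound])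
    then show False using xs(1) unfolding qdim_eq_Greatest by simp
  qed
  then show ?thesis using that xs by blast
qed

lemma qdim_eq_card:
  assumes W: "subspace W" and A: "finite A" and fA: "f ` A \<subseteq> S"
    and ind: "\<And>c. (\<Sum>a\<in>A. c a *s f a) \<in> W \<Longrightarrow> \<forall>a\<in>A. c a = 0"
    and sp: "S \<subseteq> span_mod (f ` A) W"
  shows "qdim scale (+) 0 S W = card A"
proof -
  obtain as where as: "set as = A" "distinct as" using finite_distinct_list[OF A] by blast
  define ix where "ix a = (THE i. i < length as \<and> as ! i = a)" for a
  have ix: "ix (as ! i) = i" if "i < length as" for i
    unfolding ix_def using that as(2) by (auto simp: nth_eq_iff_index_eq)
  have lc: "lin_comb c (map f as) = (\<Sum>a\<in>A. c (ix a) *s f a)" for c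
  proof -
    have "lin_comb c (map f as) = (\<Sum>i<length as. c (ix (as ! i)) *s f (as ! i))"
      unfolding lin_comb_def by (auto intro!: sum.cong simp: ix)
    also have "\<dots> = (\<Sum>a\<in>A. c (ix a) *s f a)"
      by (rule sum.reindex_bij_betw[OF bij_betw_nth[OF as(2) refl as(1)[symmetric]]])
    finally show ?thesis .
  qed
  have "qdim scale (+) 0 S W = length (map f as)"
  proof (rule qdim_eqI[OF W])
    show "set (map f as) \<subseteq> S" using fA as by auto
    show "independent_mod W (map f as)"
      unfolding independent_mod_def lc
    proof (intro allI impI)
      fix c i assume cW: "(\<Sum>a\<in>A. c (ix a) *s f a) \<in> W" and i: "i < length (map f as)"
      have "\<forall>a\<in>A. c (ix a) = 0" using cW by (rule ind)
      moreover have "as ! i \<in> A" using i as(1) by auto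
      ultimately have "c (ix (as ! i)) = 0" by blast
      then show "c i = 0" using ix i by simp
    qed
    show "S \<subseteq> span_mod (set (map f as)) W" using sp as by simp
  qed
  then show ?thesis using as distinct_card by fastforce
qed

lemma independent_mod_append:
  assumes W: "subspace W" and W0W: "W0 \<subseteq> W" and ws: "set ws \<subseteq> W" "independent_mod W0 ws"
    and ys: "independent_mod W ys"
  shows "independent_mod W0 (ws @ ys)"
  unfolding independent_mod_def
proof (rule allI, rule impI)
  fix c assume cW0: "lin_comb c (ws @ ys) \<in> W0"
  let ?c' = "\<lambda>j. c (length ws + j)"
  have "lin_comb c ws \<in> W" using span_minimal[OF ws(1) W] lin_comb_in_span by blast
  then have "lin_comb c (ws @ ys) - lin_comb c ws \<in> W"
    using cW0 W0W by (intro subspace_diff[OF W]) auto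
  then have "lin_comb ?c' ys \<in> W" unfolding lin_comb_append by simp
  then have c2: "\<forall>j<length ys. ?c' j = 0" using independent_modD[OF ys] by blast
  then have "lin_comb ?c' ys = 0" unfolding lin_comb_def by simp
  then have "lin_comb c ws \<in> W0" using cW0 unfolding lin_comb_append by simp
  then have c1: "\<forall>i<length ws. c i = 0" using independent_modD[OF ws(2)] by blast
  show "\<forall>i<length (ws @ ys). c i = 0"
  proof (intro allI impI)
    fix i assume "i < length (ws @ ys)"
    then show "c i = 0" using c1 c2[rule_format, of "i - length ws"]
      by (cases "i < length ws") auto
  qed
qed

lemma qdim_add:
  assumes W0: "subspace W0" and W: "subspace W" and S: "subspace S"
    and W0W: "W0 \<subseteq> W" and WS: "W \<subseteq> S"
    and B: "finite B" and SB: "S \<subseteq> span_mod B W0"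
  shows "qdim scale (+) 0 S W0 = qdim scale (+) 0 S W + qdim scale (+) 0 W W0"
proof -
  have WB: "W \<subseteq> span_mod B W0" and SB': "S \<subseteq> span_mod B W"
    using WS SB span_mod_mono[OF W0W] by blast+
  obtain ws where ws: "set ws \<subseteq> W" "independent_mod W0 ws" "length ws = qdim scale (+) 0 W W0"
    "W \<subseteq> span_mod (set ws) W0"
    by (rule obtain_qdim_basis[OF W0 B WB])
  obtain ys where ys: "set ys \<subseteq> S" "independent_mod W ys" "length ys = qdim scale (+) 0 S W"
    "S \<subseteq> span_mod (set ys) W"
    by (rule obtain_qdim_basis[OF W B SB'])
  have "qdim scale (+) 0 S W0 = length (ws @ ys)"
  proof (rule qdim_eqI[OF W0])
    show "set (ws @ ys) \<subseteq> S" using ws(1) ys(1) WS by auto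
    show "independent_mod W0 (ws @ ys)"
      using W W0W ws(1,2) ys(2) by (rule independent_mod_append)
    show "S \<subseteq> span_mod (set (ws @ ys)) W0"
    proof
      fix x assume "x \<in> S"
      then obtain a where a: "a \<in> span (set ys)" "x - a \<in> W" using ys(4) unfolding span_mod_def by blast
      then obtain a' where a': "a' \<in> span (set ws)" "(x - a) - a' \<in> W0"
        using ws(4) unfolding span_mod_def by blast
      have "a + a' \<in> span (set (ws @ ys))"
        using a(1) a'(1) span_mono[of "set ys" "set (ws @ ys)"] span_mono[of "set ws" "set (ws @ ys)"]
        by (intro span_add) auto
      moreover have "x - (a + a') \<in> W0" using a'(2) by (simp add: diff_diff_eq)
      ultimately show "x \<in> span_mod (set (ws @ ys)) W0" unfolding span_mod_def by blast
    qed
  qed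
  then show ?thesis using ws(3) ys(3) by simp
qed

end

context vector_space_pair
begin

lemma span_image_of_linear_on:
  assumes S1: "vs1.subspace S1" and B: "B \<subseteq> S1" and a: "a \<in> vs1.span B"
    and add: "\<And>x y. x \<in> S1 \<Longrightarrow> y \<in> S1 \<Longrightarrow> \<phi> (x + y) = \<phi> x + \<phi> y"
    and sc: "\<And>c x. x \<in> S1 \<Longrightarrow> \<phi> (c *a x) = c *b \<phi> x"
  shows "\<phi> a \<in> vs2.span (\<phi> ` B)"
proof -
  let ?T = "{a. a \<in> S1 \<and> \<phi> a \<in> vs2.span (\<phi> ` B)}"
  have "vs1.subspace ?T"
    unfolding vs1.subspace_def
  proof (intro conjI ballI allI)
    show "0 \<in> ?T" using sc[of 0 0] vs1.subspace_0[OF S1] vs2.span_zero by simp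
    show "x + y \<in> ?T" if "x \<in> ?T" "y \<in> ?T" for x y
      using that add[of x y] vs1.subspace_add[OF S1, of x y] vs2.span_add[of "\<phi> x" _ "\<phi> y"] by simp
    show "c *a x \<in> ?T" if "x \<in> ?T" for c x
      using that sc[of x c] vs1.subspace_scale[OF S1, of x c] vs2.span_scale[of "\<phi> x" _ c] by simp
  qed
  moreover have "B \<subseteq> ?T" using B by (auto intro: vs2.span_base)
  ultimately have "vs1.span B \<subseteq> ?T" by (rule vs1.span_minimal[rotated])
  then show ?thesis using a by blast
qed

lemma lin_comb_image_of_linear_on:
  assumes S1: "vs1.subspace S1" and bs: "set bs \<subseteq> S1"
    and add: "\<And>x y. x \<in> S1 \<Longrightarrow> y \<in> S1 \<Longrightarrow> \<phi> (x + y) = \<phi> x + \<phi> y"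
    and sc: "\<And>c x. x \<in> S1 \<Longrightarrow> \<phi> (c *a x) = c *b \<phi> x"
  shows "\<phi> (vs1.lin_comb c bs) = vs2.lin_comb c (map \<phi> bs)"
proof -
  have phi_sum: "\<phi> (sum F A) = (\<Sum>i\<in>A. \<phi> (F i))" if "\<And>i. i \<in> A \<Longrightarrow> F i \<in> S1"
    for F and A :: "nat set"
    using that
  proof (induct A rule: infinite_finite_induct)
    case (insert a A)
    have "sum F A \<in> S1" using insert by (auto intro: vs1.subspace_sum[OF S1])
    then show ?case using insert by (simp add: add)
  qed (use sc[of 0 0] vs1.subspace_0[OF S1] in simp_all)
  have "\<phi> (vs1.lin_comb c bs) = (\<Sum>i<length bs. \<phi> (c i *a bs ! i))"
    unfolding vs1.lin_comb_def using bs by (intro phi_sum vs1.subspace_scale[OF S1]) auto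
  also have "\<dots> = vs2.lin_comb c (map \<phi> bs)"
    unfolding vs2.lin_comb_def using bs by (auto intro!: sum.cong sc nth_mem)
  finally show ?thesis .
qed

lemma qdim_eq_linear_iso_mod:
  assumes W1: "vs1.subspace W1" and S1: "vs1.subspace S1" and W1S1: "W1 \<subseteq> S1"
    and W2: "vs2.subspace W2"
    and B: "finite B" and S1B: "S1 \<subseteq> vs1.span_mod B W1"
    and add: "\<And>x y. x \<in> S1 \<Longrightarrow> y \<in> S1 \<Longrightarrow> \<phi> (x + y) = \<phi> x + \<phi> y"
    and sc: "\<And>c x. x \<in> S1 \<Longrightarrow> \<phi> (c *a x) = c *b \<phi> x"
    and img: "\<And>x. x \<in> S1 \<Longrightarrow> \<phi> x \<in> S2"
    and surj: "\<And>y. y \<in> S2 \<Longrightarrow> \<exists>x\<in>S1. y - \<phi> x \<in> W2"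
    and ker: "\<And>x. x \<in> S1 \<Longrightarrow> \<phi> x \<in> W2 \<longleftrightarrow> x \<in> W1"
  shows "qdim s2 (+) 0 S2 W2 = qdim s1 (+) 0 S1 W1"
proof -
  obtain bs where bs: "set bs \<subseteq> S1" "vs1.independent_mod W1 bs"
    "length bs = qdim s1 (+) 0 S1 W1" "S1 \<subseteq> vs1.span_mod (set bs) W1"
    by (rule vs1.obtain_qdim_basis[OF W1 B S1B])
  have span_S1: "vs1.span (set bs) \<subseteq> S1" using bs(1) S1 by (rule vs1.span_minimal)
  have lin_comb: "\<phi> (vs1.lin_comb c bs) = vs2.lin_comb c (map \<phi> bs)" for c
    by (rule lin_comb_image_of_linear_on[OF S1 bs(1) add sc])
  have "qdim s2 (+) 0 S2 W2 = length (map \<phi> bs)"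
  proof (rule vs2.qdim_eqI[OF W2])
    show "set (map \<phi> bs) \<subseteq> S2" using bs(1) img by auto
    show "vs2.independent_mod W2 (map \<phi> bs)"
      unfolding vs2.independent_mod_def
    proof (rule allI, rule impI)
      fix c assume "vs2.lin_comb c (map \<phi> bs) \<in> W2"
      moreover have "vs1.lin_comb c bs \<in> S1" using span_S1 vs1.lin_comb_in_span by blast
      ultimately have "vs1.lin_comb c bs \<in> W1" using ker lin_comb by metis
      then show "\<forall>i<length (map \<phi> bs). c i = 0" using vs1.independent_modD[OF bs(2)] by simp
    qed
    show "S2 \<subseteq> vs2.span_mod (set (map \<phi> bs)) W2"
    proof
      fix y assume "y \<in> S2"
      then obtain x where x: "x \<in> S1" "y - \<phi> x \<in> W2" using surj by blast
      then obtain a where a: "a \<in> vs1.span (set bs)" "x - a \<in> W1"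
        using bs(4) unfolding vs1.span_mod_def by blast
      have aS: "a \<in> S1" and xaS: "x - a \<in> S1" using a span_S1 W1S1 by auto
      have "y - \<phi> a = (y - \<phi> x) + \<phi> (x - a)"
        using add[OF xaS aS] by (simp add: algebra_simps)
      also have "\<dots> \<in> W2" using ker[OF xaS] a(2) x(2) vs2.subspace_add[OF W2] by blast
      finally show "y \<in> vs2.span_mod (set (map \<phi> bs)) W2"
        using span_image_of_linear_on[OF S1 bs(1) a(1) add sc]
        unfolding vs2.span_mod_def by auto
    qed
  qed
  then show ?thesis using bs(3) by simp
qed

end

section \<open>Paths\<close>

lemma valid_path_cat:
  assumes p: "valid_path V E s h p" and q: "valid_path V E s h q" and e: "path_end h p = fst q"
  shows "valid_path V E s h (fst p, snd p @ snd q)"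
proof -
  obtain v as where pv: "p = (v, as)" by (cases p)
  obtain w bs where qv: "q = (w, bs)" by (cases q)
  have p1: "v \<in> V" "set as \<subseteq> E" "as \<noteq> [] \<Longrightarrow> s (hd as) = v"
    "\<And>i. Suc i < length as \<Longrightarrow> h (as!i) = s (as ! Suc i)"
    using p unfolding pv valid_path_def by auto
  have q1: "w \<in> V" "set bs \<subseteq> E" "bs \<noteq> [] \<Longrightarrow> s (hd bs) = w"
    "\<And>i. Suc i < length bs \<Longrightarrow> h (bs!i) = s (bs ! Suc i)"
    using q unfolding qv valid_path_def by auto
  have e1: "(if as = [] then v else h (last as)) = w" using e by (cases "as = []") (simp_all add: path_end_def pv qv)
  have adj: "h ((as @ bs) ! i) = s ((as @ bs) ! Suc i)" if i: "Suc i < length (as @ bs)" for i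
  proof (cases "Suc i < length as")
    case True then show ?thesis using p1(4)[OF True] by (simp add: nth_append)
  next
    case False
    show ?thesis
    proof (cases "Suc i = length as")
      case True
      then have ne: "as \<noteq> []" by auto
      have bne: "bs \<noteq> []" using i True by auto
      have ii: "i = length as - 1" using True by simp
      have "(as @ bs) ! i = last as" using True ne unfolding ii by (simp add: nth_append last_conv_nth)
      moreover have "(as @ bs) ! Suc i = hd bs" using True bne by (simp add: nth_append hd_conv_nth)
      ultimately show ?thesis using e1 ne q1(3)[OF bne] by simp
    next
      case F2: False
      then have ge: "length as \<le> i" using False by simp
      then have "Suc (i - length as) < length bs" using i by simp
      from q1(4)[OF this] ge show ?thesis
        by (simp add: nth_append Suc_diff_le)
    qed
  qed
  have hd1: "s (hd (as @ bs)) = v" if "as @ bs \<noteq> []"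
  proof (cases "as = []")
    case True then show ?thesis using that e1 q1(3) by simp
  next
    case False then show ?thesis using p1(3) by simp
  qed
  show ?thesis unfolding pv qv valid_path_def using p1 q1 adj hd1 by auto
qed

lemma path_end_cat: "path_end h p = fst q \<Longrightarrow> path_end h (fst p, snd p @ snd q) = path_end h q"
  by (auto simp: path_end_def)

lemma valid_path_snocD:
  assumes "valid_path V E s h (v, as @ [e])"
  shows "valid_path V E s h (v, as)" "e \<in> E" "path_end h (v, as) = s e"
proof -
  have a: "v \<in> V" "set as \<subseteq> E" "e \<in> E" "s (hd (as @ [e])) = v"
    "\<And>i. Suc i < length (as @ [e]) \<Longrightarrow> h ((as @ [e])!i) = s ((as @ [e]) ! Suc i)"
    using assms unfolding valid_path_def by auto
  show "e \<in> E" by fact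
  show "valid_path V E s h (v, as)"
    unfolding valid_path_def
  proof (intro conjI impI allI)
    show "fst (v, as) \<in> V" "set (snd (v, as)) \<subseteq> E" using a by auto
    show "s (hd (snd (v, as))) = fst (v, as)" if "snd (v, as) \<noteq> []" using a(4) that by simp
    fix i assume "Suc i < length (snd (v, as))"
    then show "h (snd (v, as) ! i) = s (snd (v, as) ! Suc i)" using a(5)[of i] by (simp add: nth_append)
  qed
  show "path_end h (v, as) = s e"
  proof (cases "as = []")
    case True then show ?thesis using a(4) by (simp add: path_end_def)
  next
    case False
    then have "Suc (length as - 1) < length (as @ [e])" by simp
    from a(5)[OF this] False show ?thesis
      by (simp add: path_end_def nth_append last_conv_nth)
  qed
qed

lemma valid_path_start: "valid_path V E s h p \<Longrightarrow> fst p \<in> V"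
  by (simp add: valid_path_def)

lemma valid_path_end:
  assumes "valid_path V E s h p" "\<forall>e\<in>E. s e \<in> V \<and> h e \<in> V"
  shows "path_end h p \<in> V"
proof (cases "snd p = []")
  case True then show ?thesis using assms by (simp add: path_end_def valid_path_def)
next
  case False
  then have "last (snd p) \<in> E" using assms(1) last_in_set by (auto simp: valid_path_def)
  then show ?thesis using assms(2) False by (simp add: path_end_def)
qed

lemma valid_path_appendD:
  assumes v: "valid_path V E s h (v, as @ bs)" and arrow_ends: "\<forall>e\<in>E. s e \<in> V \<and> h e \<in> V"
  shows "valid_path V E s h (v, as)" "valid_path V E s h (path_end h (v, as), bs)"
proof -
  have a: "v \<in> V" "set as \<subseteq> E" "set bs \<subseteq> E" "as @ bs \<noteq> [] \<Longrightarrow> s (hd (as @ bs)) = v"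
    "\<And>i. Suc i < length (as @ bs) \<Longrightarrow> h ((as @ bs)!i) = s ((as @ bs) ! Suc i)"
    using v unfolding valid_path_def by auto
  show "valid_path V E s h (v, as)"
    unfolding valid_path_def
  proof (intro conjI impI allI)
    show "fst (v, as) \<in> V" "set (snd (v, as)) \<subseteq> E" using a by auto
    show "s (hd (snd (v, as))) = fst (v, as)" if "snd (v, as) \<noteq> []" using a(4) that by simp
    fix i assume "Suc i < length (snd (v, as))"
    then show "h (snd (v, as) ! i) = s (snd (v, as) ! Suc i)" using a(5)[of i] by (simp add: nth_append)
  qed
  show "valid_path V E s h (path_end h (v, as), bs)"
    unfolding valid_path_def
  proof (intro conjI impI allI)
    show "fst (path_end h (v, as), bs) \<in> V"
    proof (cases "as = []")
      case True then show ?thesis using a by (simp add: path_end_def)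
    next
      case False
      then have "last as \<in> E" using a(2) last_in_set by blast
      then show ?thesis using arrow_ends False by (simp add: path_end_def)
    qed
    show "set (snd (path_end h (v, as), bs)) \<subseteq> E" using a by simp
    show "s (hd (snd (path_end h (v, as), bs))) = fst (path_end h (v, as), bs)"
      if bne: "snd (path_end h (v, as), bs) \<noteq> []"
    proof (cases "as = []")
      case True then show ?thesis using a(4) bne by (simp add: path_end_def)
    next
      case False
      then have "Suc (length as - 1) < length (as @ bs)" using bne by simp
      from a(5)[OF this] False bne show ?thesis
        by (simp add: path_end_def nth_append last_conv_nth hd_conv_nth)
    qed
    fix i assume "Suc i < length (snd (path_end h (v, as), bs))"
    then have "Suc (length as + i) < length (as @ bs)" by simp
    from a(5)[OF this] show "h (snd (path_end h (v, as), bs) ! i) = s (snd (path_end h (v, as), bs) ! Suc i)"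
      by (simp add: nth_append)
  qed
qed

lemma valid_path_at_arrow:
  assumes arrow_ends: "\<forall>e\<in>E. s e \<in> V \<and> h e \<in> V"
    and p: "valid_path V E s h (v, as)" and i: "i < length as" "as ! i = r"
  shows "valid_path V E s h (v, take i as)" "path_end h (v, take i as) = s r"
    "valid_path V E s h (h r, drop (Suc i) as)"
proof -
  have v1: "valid_path V E s h (v, take i as @ r # drop (Suc i) as)"
    using p by (simp only: i(2)[symmetric] id_take_nth_drop[OF i(1), symmetric])
  show "valid_path V E s h (v, take i as)" using valid_path_appendD(1)[OF v1 arrow_ends] .
  have v2: "valid_path V E s h (path_end h (v, take i as), r # drop (Suc i) as)"
    using valid_path_appendD(2)[OF v1 arrow_ends] .
  then show e: "path_end h (v, take i as) = s r" by (simp add: valid_path_def)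
  have v3: "valid_path V E s h (path_end h (v, take i as), [r] @ drop (Suc i) as)" using v2 by simp
  have "valid_path V E s h (path_end h (path_end h (v, take i as), [r]), drop (Suc i) as)"
    using valid_path_appendD(2)[OF v3 arrow_ends] .
  then show "valid_path V E s h (h r, drop (Suc i) as)" by (simp add: path_end_def)
qed

section \<open>The path algebra\<close>

lemma sum_fun_apply: "(\<Sum>i\<in>A. F i) x = (\<Sum>i\<in>A. F i x)"
  by (induct A rule: infinite_finite_induct) auto

interpretation PV: vector_space "psc :: 'k::field \<Rightarrow> ('a \<Rightarrow> 'k) \<Rightarrow> 'a \<Rightarrow> 'k"
  by unfold_locales (auto simp: psc_def fun_eq_iff algebra_simps)

interpretation DV: vector_space "Dsc :: 'k::field \<Rightarrow> ('b \<Rightarrow> 'a \<Rightarrow> 'k) \<Rightarrow> 'b \<Rightarrow> 'a \<Rightarrow> 'k"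
  by unfold_locales (auto simp: Dsc_def psc_def fun_eq_iff algebra_simps)

interpretation PDV: vector_space_pair "psc :: 'k::field \<Rightarrow> ('a \<Rightarrow> 'k) \<Rightarrow> 'a \<Rightarrow> 'k"
  "Dsc :: 'k::field \<Rightarrow> ('b \<Rightarrow> 'a \<Rightarrow> 'k) \<Rightarrow> 'b \<Rightarrow> 'a \<Rightarrow> 'k" ..

lemma padd_eq: "padd = (+)" by (simp add: padd_def fun_eq_iff)
lemma psub_eq: "psub = (-)" by (simp add: psub_def fun_eq_iff)
lemma pzero_eq: "pzero = 0" by (simp add: pzero_def fun_eq_iff)
lemma Dadd_eq: "Dadd = (+)" by (simp add: Dadd_def padd_def fun_eq_iff)
lemma Dzero_eq: "Dzero = 0" by (simp add: Dzero_def pzero_def fun_eq_iff)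
lemma psc_apply[simp]: "psc c f p = c * f p" by (simp add: psc_def)
lemma Dsc_apply[simp]: "Dsc c D x = psc c (D x)" by (simp add: Dsc_def)
lemma ind_apply: "ind q p = (if p = q then 1 else 0)" by (simp add: ind_def)

definition fin_supp :: "('a \<Rightarrow> 'k::field) \<Rightarrow> bool" where
  "fin_supp f \<longleftrightarrow> finite {p. f p \<noteq> 0}"

lemma fin_supp_add[simp]: "fin_supp f \<Longrightarrow> fin_supp g \<Longrightarrow> fin_supp (f + g)"
  unfolding fin_supp_def by (rule finite_subset[of _ "{p. f p \<noteq> 0} \<union> {p. g p \<noteq> 0}"]) auto

lemma fin_supp_psc[simp]: "fin_supp f \<Longrightarrow> fin_supp (psc c f)"
  unfolding fin_supp_def by (rule finite_subset[of _ "{p. f p \<noteq> 0}"]) auto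
lemma fin_supp_uminus[simp]: "fin_supp f \<Longrightarrow> fin_supp (- f)"
  unfolding fin_supp_def by (rule finite_subset[of _ "{p. f p \<noteq> 0}"]) auto
lemma fin_supp_zero[simp]: "fin_supp 0" unfolding fin_supp_def by simp
lemma fin_supp_ind[simp]: "fin_supp (ind q)"
  unfolding fin_supp_def by (rule finite_subset[of _ "{q}"]) (auto simp: ind_def)
lemma fin_supp_sum: "(\<And>i. i \<in> A \<Longrightarrow> fin_supp (F i)) \<Longrightarrow> fin_supp (\<Sum>i\<in>A. F i)"
  by (induct A rule: infinite_finite_induct) auto

lemma fin_supp_expand:
  assumes "fin_supp f" "finite A" "{p. f p \<noteq> 0} \<subseteq> A"
  shows "f = (\<Sum>p\<in>A. psc (f p) (ind p))"
proof
  fix r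
  have "(\<Sum>p\<in>A. psc (f p) (ind p)) r = (\<Sum>p\<in>A. if p = r then f p else 0)"
    unfolding sum_fun_apply by (rule sum.cong) (auto simp: ind_def)
  also have "\<dots> = f r" using assms by (auto simp: sum.delta)
  finally show "f r = (\<Sum>p\<in>A. psc (f p) (ind p)) r" by simp
qed

lemma pathalg_fin_supp: "x \<in> pathalg V E s h \<Longrightarrow> fin_supp x"
  by (simp add: pathalg_def fin_supp_def)

lemma pathalg_valid: "x \<in> pathalg V E s h \<Longrightarrow> x p \<noteq> 0 \<Longrightarrow> valid_path V E s h p"
  unfolding pathalg_def by blast

lemma pathalg_subspace: "PV.subspace (pathalg V E s h :: (('v,'e) path \<Rightarrow> 'k::field) set)"
  unfolding PV.subspace_def
proof (intro conjI ballI allI)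
  show "0 \<in> pathalg V E s h" by (simp add: pathalg_def)
next
  fix x y :: "('v,'e) path \<Rightarrow> 'k" assume "x \<in> pathalg V E s h" "y \<in> pathalg V E s h"
  then show "x + y \<in> pathalg V E s h"
    using fin_supp_add[of x y] unfolding pathalg_def fin_supp_def
    by (auto simp del: plus_fun_apply) (metis add.left_neutral add.right_neutral plus_fun_apply)
next
  fix c and x :: "('v,'e) path \<Rightarrow> 'k" assume "x \<in> pathalg V E s h"
  then show "psc c x \<in> pathalg V E s h"
    using fin_supp_psc[of x c] by (auto simp: pathalg_def fin_supp_def)
qed

lemma ind_in_pathalg: "valid_path V E s h q \<Longrightarrow> ind q \<in> pathalg V E s h"
  using fin_supp_ind[of q] by (auto simp: pathalg_def fin_supp_def ind_def)

definition cat_coeff :: "('e \<Rightarrow> 'v) \<Rightarrow> ('v,'e) path \<Rightarrow> ('v,'e) path \<Rightarrow> ('v,'e) path \<Rightarrow> 'k::field" where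
  "cat_coeff h p q r = (if path_cat h p q = Some r then 1 else 0)"

lemma pmul_eq_sum_on:
  assumes "finite A" "finite B" "{p. f p \<noteq> 0} \<subseteq> A" "{q. g q \<noteq> 0} \<subseteq> B"
  shows "pmul h f g r = (\<Sum>p\<in>A. \<Sum>q\<in>B. f p * g q * cat_coeff h p q r)"
proof -
  let ?T = "\<lambda>p q. f p * g q * cat_coeff h p q r"
  have fA: "finite {p. f p \<noteq> 0}" and fB: "finite {q. g q \<noteq> 0}"
    using assms finite_subset by auto
  have "pmul h f g r = (\<Sum>p\<in>{p. f p \<noteq> 0}. \<Sum>q\<in>{q. g q \<noteq> 0}. ?T p q)"
    unfolding pmul_def cat_coeff_def by (intro sum.cong) auto
  also have "\<dots> = (\<Sum>p\<in>{p. f p \<noteq> 0}. \<Sum>q\<in>B. ?T p q)"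
    by (intro sum.cong refl sum.mono_neutral_left) (use assms in auto)
  also have "\<dots> = (\<Sum>p\<in>A. \<Sum>q\<in>B. ?T p q)"
    by (intro sum.mono_neutral_left) (use assms in auto)
  finally show ?thesis .
qed

lemma pmul_add_left:
  assumes "fin_supp f" "fin_supp g" "fin_supp k"
  shows "pmul h (f + g) k = pmul h f k + pmul h g k"
proof
  fix r
  let ?A = "{p. f p \<noteq> 0} \<union> {p. g p \<noteq> 0}" and ?B = "{q. k q \<noteq> 0}"
  have fin: "finite ?A" "finite ?B" using assms by (auto simp: fin_supp_def)
  have "pmul h (f + g) k r = (\<Sum>p\<in>?A. \<Sum>q\<in>?B. (f + g) p * k q * cat_coeff h p q r)"
    by (rule pmul_eq_sum_on) (use fin in auto)
  moreover have "pmul h f k r = (\<Sum>p\<in>?A. \<Sum>q\<in>?B. f p * k q * cat_coeff h p q r)"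
    by (rule pmul_eq_sum_on) (use fin in auto)
  moreover have "pmul h g k r = (\<Sum>p\<in>?A. \<Sum>q\<in>?B. g p * k q * cat_coeff h p q r)"
    by (rule pmul_eq_sum_on) (use fin in auto)
  ultimately show "pmul h (f + g) k r = (pmul h f k + pmul h g k) r"
    by (simp add: sum.distrib[symmetric] algebra_simps)
qed

lemma pmul_add_right:
  assumes "fin_supp f" "fin_supp g" "fin_supp k"
  shows "pmul h k (f + g) = pmul h k f + pmul h k g"
proof
  fix r
  let ?B = "{p. f p \<noteq> 0} \<union> {p. g p \<noteq> 0}" and ?A = "{q. k q \<noteq> 0}"
  have fin: "finite ?A" "finite ?B" using assms by (auto simp: fin_supp_def)
  have "pmul h k (f + g) r = (\<Sum>p\<in>?A. \<Sum>q\<in>?B. k p * (f + g) q * cat_coeff h p q r)"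
    by (rule pmul_eq_sum_on) (use fin in auto)
  moreover have "pmul h k f r = (\<Sum>p\<in>?A. \<Sum>q\<in>?B. k p * f q * cat_coeff h p q r)"
    by (rule pmul_eq_sum_on) (use fin in auto)
  moreover have "pmul h k g r = (\<Sum>p\<in>?A. \<Sum>q\<in>?B. k p * g q * cat_coeff h p q r)"
    by (rule pmul_eq_sum_on) (use fin in auto)
  ultimately show "pmul h k (f + g) r = (pmul h k f + pmul h k g) r"
    by (simp add: sum.distrib[symmetric] algebra_simps)
qed

lemma pmul_psc_left:
  assumes "fin_supp f" "fin_supp k"
  shows "pmul h (psc c f) k = psc c (pmul h f k)"
proof
  fix r
  let ?A = "{p. f p \<noteq> 0}" and ?B = "{q. k q \<noteq> 0}"
  have fin: "finite ?A" "finite ?B" using assms by (auto simp: fin_supp_def)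
  have "pmul h (psc c f) k r = (\<Sum>p\<in>?A. \<Sum>q\<in>?B. psc c f p * k q * cat_coeff h p q r)"
    by (rule pmul_eq_sum_on) (use fin in auto)
  moreover have "pmul h f k r = (\<Sum>p\<in>?A. \<Sum>q\<in>?B. f p * k q * cat_coeff h p q r)"
    by (rule pmul_eq_sum_on) (use fin in auto)
  ultimately show "pmul h (psc c f) k r = psc c (pmul h f k) r"
    by (simp add: sum_distrib_left algebra_simps)
qed

lemma pmul_psc_right:
  assumes "fin_supp f" "fin_supp k"
  shows "pmul h k (psc c f) = psc c (pmul h k f)"
proof
  fix r
  let ?B = "{p. f p \<noteq> 0}" and ?A = "{q. k q \<noteq> 0}"
  have fin: "finite ?A" "finite ?B" using assms by (auto simp: fin_supp_def)
  have "pmul h k (psc c f) r = (\<Sum>p\<in>?A. \<Sum>q\<in>?B. k p * psc c f q * cat_coeff h p q r)"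
    by (rule pmul_eq_sum_on) (use fin in auto)
  moreover have "pmul h k f r = (\<Sum>p\<in>?A. \<Sum>q\<in>?B. k p * f q * cat_coeff h p q r)"
    by (rule pmul_eq_sum_on) (use fin in auto)
  ultimately show "pmul h k (psc c f) r = psc c (pmul h k f) r"
    by (simp add: sum_distrib_left algebra_simps)
qed

lemma pmul_zero_left[simp]: "pmul h 0 k = 0"
  by (simp add: pmul_def fun_eq_iff)
lemma pmul_zero_right[simp]: "pmul h k 0 = 0"
  by (simp add: pmul_def fun_eq_iff)

lemma psc_minus_one: "psc (-1) f = - f" by (simp add: fun_eq_iff)

lemma pmul_diff_left:
  assumes "fin_supp f" "fin_supp g" "fin_supp k"
  shows "pmul h (f - g) k = pmul h f k - pmul h g k"
proof -
  have e: "f - g = f + psc (-1) g" by (simp add: psc_minus_one)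
  have "pmul h (f - g) k = pmul h f k + pmul h (psc (-1) g) k"
    unfolding e by (rule pmul_add_left) (use assms in auto)
  also have "pmul h (psc (-1) g) k = psc (-1) (pmul h g k)"
    by (rule pmul_psc_left) (use assms in auto)
  finally show ?thesis by (simp only: psc_minus_one diff_conv_add_uminus)
qed

lemma pmul_diff_right:
  assumes "fin_supp f" "fin_supp g" "fin_supp k"
  shows "pmul h k (f - g) = pmul h k f - pmul h k g"
proof -
  have e: "f - g = f + psc (-1) g" by (simp add: psc_minus_one)
  have "pmul h k (f - g) = pmul h k f + pmul h k (psc (-1) g)"
    unfolding e by (rule pmul_add_right) (use assms in auto)
  also have "pmul h k (psc (-1) g) = psc (-1) (pmul h k g)"
    by (rule pmul_psc_right) (use assms in auto)
  finally show ?thesis by (simp only: psc_minus_one diff_conv_add_uminus)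
qed

lemma pmul_sum_left:
  assumes "\<And>i. i \<in> A \<Longrightarrow> fin_supp (F i)" "fin_supp k"
  shows "pmul h (\<Sum>i\<in>A. F i) k = (\<Sum>i\<in>A. pmul h (F i) k)"
  using assms
proof (induct A rule: infinite_finite_induct)
  case (insert a A)
  have "pmul h (\<Sum>i\<in>insert a A. F i) k = pmul h (F a + (\<Sum>i\<in>A. F i)) k"
    by (rule arg_cong[where f="\<lambda>z. pmul h z k"], rule sum.insert[OF insert(1,2)])
  also have "\<dots> = pmul h (F a) k + pmul h (\<Sum>i\<in>A. F i) k"
    by (rule pmul_add_left) (use insert in \<open>auto intro: fin_supp_sum\<close>)
  also have "\<dots> = (\<Sum>i\<in>insert a A. pmul h (F i) k)"
    using insert by (simp add: sum.insert[OF insert(1,2)])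
  finally show ?case .
qed auto

lemma pmul_sum_right:
  assumes "\<And>i. i \<in> A \<Longrightarrow> fin_supp (F i)" "fin_supp k"
  shows "pmul h k (\<Sum>i\<in>A. F i) = (\<Sum>i\<in>A. pmul h k (F i))"
  using assms
proof (induct A rule: infinite_finite_induct)
  case (insert a A)
  have "pmul h k (\<Sum>i\<in>insert a A. F i) = pmul h k (F a + (\<Sum>i\<in>A. F i))"
    by (rule arg_cong[where f="\<lambda>z. pmul h k z"], rule sum.insert[OF insert(1,2)])
  also have "\<dots> = pmul h k (F a) + pmul h k (\<Sum>i\<in>A. F i)"
    by (rule pmul_add_right) (use insert in \<open>auto intro: fin_supp_sum\<close>)
  also have "\<dots> = (\<Sum>i\<in>insert a A. pmul h k (F i))"
    using insert by (simp add: sum.insert[OF insert(1,2)])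
  finally show ?case .
qed auto

lemma pmul_ind_apply: "pmul h (ind a) (ind b) r = cat_coeff h a b r"
proof -
  have "pmul h (ind a) (ind b) r = (\<Sum>p\<in>{a}. \<Sum>q\<in>{b}. ind a p * ind b q * cat_coeff h p q r)"
    by (rule pmul_eq_sum_on) (auto simp: ind_def)
  then show ?thesis by (simp add: ind_def)
qed

lemma pmul_ind: "pmul h (ind a) (ind b) =
   (if path_end h a = fst b then ind (fst a, snd a @ snd b) else 0)"
  by (auto simp: fun_eq_iff pmul_ind_apply cat_coeff_def path_cat_def ind_apply)

lemma pmul_nonzero_cat:
  assumes "fin_supp f" "fin_supp g" and r: "pmul h f g r \<noteq> 0"
  obtains p q where "f p \<noteq> 0" "g q \<noteq> 0" "path_end h p = fst q" "r = (fst p, snd p @ snd q)"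
proof -
  let ?A = "{p. f p \<noteq> 0}" and ?B = "{q. g q \<noteq> 0}"
  have fin: "finite ?A" "finite ?B" using assms by (auto simp: fin_supp_def)
  have "(\<Sum>p\<in>?A. \<Sum>q\<in>?B. f p * g q * cat_coeff h p q r) \<noteq> 0"
    using pmul_eq_sum_on[OF fin, of f g h r] r by simp
  then obtain p where p: "p \<in> ?A" "(\<Sum>q\<in>?B. f p * g q * cat_coeff h p q r) \<noteq> 0"
    using sum.not_neutral_contains_not_neutral by blast
  then obtain q where q: "q \<in> ?B" "f p * g q * cat_coeff h p q r \<noteq> 0"
    using sum.not_neutral_contains_not_neutral by blast
  then have "path_end h p = fst q" "r = (fst p, snd p @ snd q)"
    by (auto simp: cat_coeff_def path_cat_def split: if_splits)
  with p q that show ?thesis by simp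
qed

lemma fin_supp_pmul:
  assumes "fin_supp f" "fin_supp g"
  shows "fin_supp (pmul h f g)"
proof -
  let ?A = "{p. f p \<noteq> 0}" and ?B = "{q. g q \<noteq> 0}"
  have "{r. pmul h f g r \<noteq> 0} \<subseteq> (\<lambda>(p,q). (fst p, snd p @ snd q)) ` (?A \<times> ?B)"
    by (auto elim!: pmul_nonzero_cat[OF assms])
  moreover have "finite ?A" "finite ?B" using assms by (auto simp: fin_supp_def)
  ultimately show ?thesis unfolding fin_supp_def by (auto intro: finite_subset)
qed

lemma pmul_in_pathalg:
  assumes x: "x \<in> pathalg V E s h" and y: "y \<in> pathalg V E s h"
  shows "pmul h x y \<in> pathalg V E s h"
proof -
  have "valid_path V E s h r" if "pmul h x y r \<noteq> 0" for r
  proof (rule pmul_nonzero_cat[OF pathalg_fin_supp[OF x] pathalg_fin_supp[OF y] that])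
    fix p q assume "x p \<noteq> 0" "y q \<noteq> 0" "path_end h p = fst q" "r = (fst p, snd p @ snd q)"
    then show ?thesis using valid_path_cat pathalg_valid[OF x] pathalg_valid[OF y] by metis
  qed
  moreover have "fin_supp (pmul h x y)"
    using x y by (auto intro: fin_supp_pmul pathalg_fin_supp)
  ultimately show ?thesis by (auto simp: pathalg_def fin_supp_def)
qed

lemma pmul_ind_assoc:
  "pmul h (pmul h (ind a) (ind b)) (ind c) = pmul h (ind a) (pmul h (ind b) (ind c))"
  by (simp add: pmul_ind path_end_cat)

lemma pmul_sum_psc_left:
  assumes "\<And>i. i \<in> A \<Longrightarrow> fin_supp (F i)" "fin_supp g"
  shows "pmul h (\<Sum>i\<in>A. psc (c i) (F i)) g = (\<Sum>i\<in>A. psc (c i) (pmul h (F i) g))"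
  using assms by (simp add: pmul_sum_left pmul_psc_left)

lemma pmul_sum_psc_right:
  assumes "\<And>i. i \<in> A \<Longrightarrow> fin_supp (F i)" "fin_supp g"
  shows "pmul h g (\<Sum>i\<in>A. psc (c i) (F i)) = (\<Sum>i\<in>A. psc (c i) (pmul h g (F i)))"
  using assms by (simp add: pmul_sum_right pmul_psc_right)

lemma pmul_expand_ind:
  assumes x: "fin_supp x" and y: "fin_supp y"
  shows "pmul h x y = (\<Sum>a\<in>{a. x a \<noteq> 0}. psc (x a) (\<Sum>b\<in>{b. y b \<noteq> 0}. psc (y b) (pmul h (ind a) (ind b))))"
proof -
  let ?A = "{a. x a \<noteq> 0}" and ?B = "{b. y b \<noteq> 0}"
  have fin: "finite ?A" "finite ?B" using x y by (auto simp: fin_supp_def)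
  have ex: "x = (\<Sum>a\<in>?A. psc (x a) (ind a))" by (rule fin_supp_expand[OF x fin(1)]) simp
  have ey: "y = (\<Sum>b\<in>?B. psc (y b) (ind b))" by (rule fin_supp_expand[OF y fin(2)]) simp
  have "pmul h x y = pmul h (\<Sum>a\<in>?A. psc (x a) (ind a)) y" using ex by simp
  also have "\<dots> = (\<Sum>a\<in>?A. psc (x a) (pmul h (ind a) y))"
    by (rule pmul_sum_psc_left) (use y in auto)
  also have "\<dots> = (\<Sum>a\<in>?A. psc (x a) (pmul h (ind a) (\<Sum>b\<in>?B. psc (y b) (ind b))))"
    using ey by simp
  also have "\<dots> = (\<Sum>a\<in>?A. psc (x a) (\<Sum>b\<in>?B. psc (y b) (pmul h (ind a) (ind b))))"
    by (rule sum.cong[OF refl], subst pmul_sum_psc_right) auto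
  finally show ?thesis .
qed

lemma pmul_assoc:
  assumes x: "fin_supp x" and y: "fin_supp y" and z: "fin_supp z"
  shows "pmul h (pmul h x y) z = pmul h x (pmul h y z)"
proof -
  let ?A = "{a. x a \<noteq> 0}" and ?B = "{b. y b \<noteq> 0}" and ?C = "{c. z c \<noteq> 0}"
  have fin: "finite ?C" using z by (auto simp: fin_supp_def)
  have ez: "z = (\<Sum>c\<in>?C. psc (z c) (ind c))" by (rule fin_supp_expand[OF z fin]) simp
  have fM: "fin_supp (pmul h (ind a) (ind b))" for a b by (rule fin_supp_pmul) auto
  have fS: "fin_supp (\<Sum>b\<in>?B. psc (y b) (pmul h (ind a) (ind b)))" for a
    by (rule fin_supp_sum) (auto simp: fM)
  have mz: "pmul h (pmul h (ind a) (ind b)) z = (\<Sum>c\<in>?C. psc (z c) (pmul h (pmul h (ind a) (ind b)) (ind c)))" for a b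
    by (subst ez, rule pmul_sum_psc_right) (auto simp: fM)
  have "pmul h (pmul h x y) z = (\<Sum>a\<in>?A. psc (x a) (pmul h (\<Sum>b\<in>?B. psc (y b) (pmul h (ind a) (ind b))) z))"
    unfolding pmul_expand_ind[OF x y] by (rule pmul_sum_psc_left) (auto simp: fS z)
  also have "\<dots> = (\<Sum>a\<in>?A. psc (x a) (\<Sum>b\<in>?B. psc (y b) (\<Sum>c\<in>?C. psc (z c) (pmul h (pmul h (ind a) (ind b)) (ind c)))))"
    by (rule sum.cong[OF refl], subst pmul_sum_psc_left) (auto simp: fM z simp: mz)
  finally have L: "pmul h (pmul h x y) z = \<dots>" .
  have fN: "fin_supp (\<Sum>c\<in>?C. psc (z c) (pmul h (ind b) (ind c)))" for b
    by (rule fin_supp_sum) (auto simp: fM)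
  have fin1: "finite ?A" using x by (auto simp: fin_supp_def)
  have ex: "x = (\<Sum>a\<in>?A. psc (x a) (ind a))" by (rule fin_supp_expand[OF x fin1]) simp
  have ia: "pmul h (ind a) (pmul h y z) = (\<Sum>b\<in>?B. psc (y b) (\<Sum>c\<in>?C. psc (z c) (pmul h (ind a) (pmul h (ind b) (ind c)))))" for a
  proof -
    have "pmul h (ind a) (pmul h y z) = (\<Sum>b\<in>?B. psc (y b) (pmul h (ind a) (\<Sum>c\<in>?C. psc (z c) (pmul h (ind b) (ind c)))))"
      unfolding pmul_expand_ind[OF y z] by (rule pmul_sum_psc_right) (auto simp: fN)
    also have "\<dots> = (\<Sum>b\<in>?B. psc (y b) (\<Sum>c\<in>?C. psc (z c) (pmul h (ind a) (pmul h (ind b) (ind c)))))"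
      by (rule sum.cong[OF refl], subst pmul_sum_psc_right) (auto simp: fM)
    finally show ?thesis .
  qed
  have "pmul h x (pmul h y z) = pmul h (\<Sum>a\<in>?A. psc (x a) (ind a)) (pmul h y z)" using ex by simp
  also have "\<dots> = (\<Sum>a\<in>?A. psc (x a) (pmul h (ind a) (pmul h y z)))"
    by (rule pmul_sum_psc_left) (auto intro: fin_supp_pmul y z)
  also have "\<dots> = (\<Sum>a\<in>?A. psc (x a) (\<Sum>b\<in>?B. psc (y b) (\<Sum>c\<in>?C. psc (z c) (pmul h (ind a) (pmul h (ind b) (ind c))))))"
    by (simp only: ia)
  finally show ?thesis unfolding L by (simp only: pmul_ind_assoc)
qed

section \<open>Derivations defined on paths\<close>

definition lin_ext :: "('a \<Rightarrow> ('a \<Rightarrow> 'k::field)) \<Rightarrow> ('a \<Rightarrow> 'k) \<Rightarrow> 'a \<Rightarrow> 'k" where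
  "lin_ext \<delta> x = (\<Sum>p\<in>{p. x p \<noteq> 0}. psc (x p) (\<delta> p))"



lemma lin_ext_eq_sum_on: "finite A \<Longrightarrow> {p. x p \<noteq> 0} \<subseteq> A \<Longrightarrow> lin_ext \<delta> x = (\<Sum>p\<in>A. psc (x p) (\<delta> p))"
  unfolding lin_ext_def by (rule sum.mono_neutral_left) auto

lemma lin_ext_add:
  assumes "fin_supp x" "fin_supp y"
  shows "lin_ext \<delta> (x + y) = lin_ext \<delta> x + lin_ext \<delta> y"
proof -
  let ?A = "{p. x p \<noteq> 0} \<union> {p. y p \<noteq> 0}"
  have fA: "finite ?A" using assms by (auto simp: fin_supp_def)
  have "lin_ext \<delta> (x + y) = (\<Sum>p\<in>?A. psc ((x + y) p) (\<delta> p))" by (rule lin_ext_eq_sum_on[OF fA]) auto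
  moreover have "lin_ext \<delta> x = (\<Sum>p\<in>?A. psc (x p) (\<delta> p))" by (rule lin_ext_eq_sum_on[OF fA]) auto
  moreover have "lin_ext \<delta> y = (\<Sum>p\<in>?A. psc (y p) (\<delta> p))" by (rule lin_ext_eq_sum_on[OF fA]) auto
  ultimately show ?thesis by (simp add: sum.distrib[symmetric] PV.scale_left_distrib)
qed

lemma lin_ext_psc:
  assumes "fin_supp x"
  shows "lin_ext \<delta> (psc c x) = psc c (lin_ext \<delta> x)"
proof -
  let ?A = "{p. x p \<noteq> 0}"
  have fA: "finite ?A" using assms by (auto simp: fin_supp_def)
  have "lin_ext \<delta> (psc c x) = (\<Sum>p\<in>?A. psc (psc c x p) (\<delta> p))" by (rule lin_ext_eq_sum_on[OF fA]) auto
  moreover have "lin_ext \<delta> x = (\<Sum>p\<in>?A. psc (x p) (\<delta> p))" by (rule lin_ext_eq_sum_on[OF fA]) auto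
  ultimately show ?thesis by (simp add: PV.scale_sum_right)
qed

lemma lin_ext_ind[simp]: "lin_ext \<delta> (ind a) = \<delta> a"
  by (subst lin_ext_eq_sum_on[of "{a}"]) (auto simp: ind_def)

lemma lin_ext_zero[simp]: "lin_ext \<delta> 0 = 0"
  by (simp add: lin_ext_def)

lemma lin_ext_sum:
  assumes "\<And>i. i \<in> A \<Longrightarrow> fin_supp (F i)"
  shows "lin_ext \<delta> (\<Sum>i\<in>A. F i) = (\<Sum>i\<in>A. lin_ext \<delta> (F i))"
  using assms
proof (induct A rule: infinite_finite_induct)
  case (insert a A)
  have "lin_ext \<delta> (\<Sum>i\<in>insert a A. F i) = lin_ext \<delta> (F a + (\<Sum>i\<in>A. F i))"
    by (rule arg_cong[where f="lin_ext \<delta>"], rule sum.insert[OF insert(1,2)])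
  also have "\<dots> = lin_ext \<delta> (F a) + lin_ext \<delta> (\<Sum>i\<in>A. F i)"
    by (rule lin_ext_add) (use insert in \<open>auto intro: fin_supp_sum\<close>)
  also have "\<dots> = (\<Sum>i\<in>insert a A. lin_ext \<delta> (F i))"
    using insert by (simp add: sum.insert[OF insert(1,2)])
  finally show ?case .
qed auto

lemma lin_ext_sum_psc:
  assumes "\<And>i. i \<in> A \<Longrightarrow> fin_supp (F i)"
  shows "lin_ext \<delta> (\<Sum>i\<in>A. psc (c i) (F i)) = (\<Sum>i\<in>A. psc (c i) (lin_ext \<delta> (F i)))"
  using assms by (simp add: lin_ext_sum lin_ext_psc)

lemma lin_ext_fin_supp: "(\<And>p. fin_supp (\<delta> p)) \<Longrightarrow> fin_supp (lin_ext \<delta> x)"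
  unfolding lin_ext_def by (rule fin_supp_sum) auto

lemma lin_ext_in_pathalg:
  assumes "x \<in> pathalg V E s h" "\<And>p. valid_path V E s h p \<Longrightarrow> \<delta> p \<in> pathalg V E s h"
  shows "lin_ext \<delta> x \<in> pathalg V E s h"
  unfolding lin_ext_def
  by (rule PV.subspace_sum[OF pathalg_subspace], rule PV.subspace_scale[OF pathalg_subspace])
    (use assms in \<open>auto intro: pathalg_valid\<close>)

lemma lin_ext_leibniz:
  assumes fd: "\<And>p. fin_supp (\<delta> p)" and x: "fin_supp x" and y: "fin_supp y"
    and L: "\<And>a b. x a \<noteq> 0 \<Longrightarrow> y b \<noteq> 0 \<Longrightarrow>
      lin_ext \<delta> (pmul h (ind a) (ind b)) = pmul h (\<delta> a) (ind b) + pmul h (ind a) (\<delta> b)"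
  shows "lin_ext \<delta> (pmul h x y) = pmul h (lin_ext \<delta> x) y + pmul h x (lin_ext \<delta> y)"
proof -
  let ?A = "{a. x a \<noteq> 0}" and ?B = "{b. y b \<noteq> 0}"
  have finA: "finite ?A" and finB: "finite ?B" using x y by (auto simp: fin_supp_def)
  have fM: "fin_supp (pmul h (ind a) (ind b))" for a b by (rule fin_supp_pmul) auto
  have fS: "fin_supp (\<Sum>b\<in>?B. psc (y b) (pmul h (ind a) (ind b)))" for a
    by (rule fin_supp_sum) (simp add: fM)
  have "lin_ext \<delta> (pmul h x y) = (\<Sum>a\<in>?A. psc (x a) (lin_ext \<delta> (\<Sum>b\<in>?B. psc (y b) (pmul h (ind a) (ind b)))))"
    unfolding pmul_expand_ind[OF x y] by (rule lin_ext_sum_psc) (simp add: fS)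
  also have "\<dots> = (\<Sum>a\<in>?A. psc (x a) (\<Sum>b\<in>?B. psc (y b) (lin_ext \<delta> (pmul h (ind a) (ind b)))))"
    by (rule sum.cong[OF refl], subst lin_ext_sum_psc) (auto simp: fM)
  also have "\<dots> = (\<Sum>a\<in>?A. psc (x a) (\<Sum>b\<in>?B. psc (y b) (pmul h (\<delta> a) (ind b) + pmul h (ind a) (\<delta> b))))"
    by (intro sum.cong refl arg_cong[where f="psc _"]) (simp add: L)
  also have "\<dots> = pmul h (lin_ext \<delta> x) y + pmul h x (lin_ext \<delta> y)"
  proof -
    have ex: "x = (\<Sum>a\<in>?A. psc (x a) (ind a))" by (rule fin_supp_expand[OF x finA]) simp
    have ey: "y = (\<Sum>b\<in>?B. psc (y b) (ind b))" by (rule fin_supp_expand[OF y finB]) simp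
    have dx: "lin_ext \<delta> x = (\<Sum>a\<in>?A. psc (x a) (\<delta> a))" by (simp add: lin_ext_def)
    have dy: "lin_ext \<delta> y = (\<Sum>b\<in>?B. psc (y b) (\<delta> b))" by (simp add: lin_ext_def)
    have e1: "pmul h (lin_ext \<delta> x) y = (\<Sum>a\<in>?A. psc (x a) (\<Sum>b\<in>?B. psc (y b) (pmul h (\<delta> a) (ind b))))"
    proof -
      have "pmul h (lin_ext \<delta> x) y = (\<Sum>a\<in>?A. psc (x a) (pmul h (\<delta> a) y))"
        unfolding dx by (rule pmul_sum_psc_left) (auto simp: fd y)
      also have "\<dots> = (\<Sum>a\<in>?A. psc (x a) (\<Sum>b\<in>?B. psc (y b) (pmul h (\<delta> a) (ind b))))"
        by (rule sum.cong[OF refl], subst ey, subst pmul_sum_psc_right) (auto simp: fd)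
      finally show ?thesis .
    qed
    have e2: "pmul h x (lin_ext \<delta> y) = (\<Sum>a\<in>?A. psc (x a) (\<Sum>b\<in>?B. psc (y b) (pmul h (ind a) (\<delta> b))))"
    proof -
      have "pmul h x (lin_ext \<delta> y) = (\<Sum>a\<in>?A. psc (x a) (pmul h (ind a) (lin_ext \<delta> y)))"
        by (subst ex, rule pmul_sum_psc_left) (auto simp: lin_ext_fin_supp fd)
      also have "\<dots> = (\<Sum>a\<in>?A. psc (x a) (\<Sum>b\<in>?B. psc (y b) (pmul h (ind a) (\<delta> b))))"
        by (rule sum.cong[OF refl], subst dy, subst pmul_sum_psc_right) (auto simp: fd)
      finally show ?thesis .
    qed
    show ?thesis unfolding e1 e2
      by (simp add: fun_eq_iff sum_fun_apply sum.distrib distrib_left)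
  qed
  finally show ?thesis .
qed

definition arrow_occs :: "'e \<Rightarrow> ('v,'e) path \<Rightarrow> nat set" where
  "arrow_occs r p = {i. i < length (snd p) \<and> snd p ! i = r}"

definition splice_at :: "'e \<Rightarrow> ('v,'e) path \<Rightarrow> ('v,'e) path \<Rightarrow> nat \<Rightarrow> ('v,'e) path" where
  "splice_at r q p i = (fst p, take i (snd p) @ snd q @ drop (Suc i) (snd p))"

definition subst_arrow :: "'e \<Rightarrow> ('v,'e) path \<Rightarrow> ('v,'e) path \<Rightarrow> ('v,'e) path \<Rightarrow> 'k::field" where
  "subst_arrow r q p = (\<Sum>i\<in>arrow_occs r p. ind (splice_at r q p i))"

lemma finite_arrow_occs[simp]: "finite (arrow_occs r p)"
  unfolding arrow_occs_def by (rule finite_subset[of _ "{..<length (snd p)}"]) auto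

lemma fin_supp_subst_arrow[simp]: "fin_supp (subst_arrow r q p)"
  unfolding subst_arrow_def by (rule fin_supp_sum) simp

lemma splice_at_props:
  assumes arrow_ends: "\<forall>e\<in>E. s e \<in> V \<and> h e \<in> V"
    and vq: "valid_path V E s h q" and sr: "s r = fst q" and hr: "h r = path_end h q"
    and p: "valid_path V E s h p" and i: "i \<in> arrow_occs r p"
  shows "valid_path V E s h (splice_at r q p i)" "path_end h (splice_at r q p i) = path_end h p"
    "fst (splice_at r q p i) = fst p"
proof -
  obtain v as where pv: "p = (v, as)" by (cases p)
  have i': "i < length as" "as ! i = r" using i unfolding arrow_occs_def pv by auto
  note st = valid_path_at_arrow[OF arrow_ends p[unfolded pv] i']
  let ?rest = "drop (Suc i) as"
  have vs: "valid_path V E s h (fst q, snd q @ snd (h r, ?rest))"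
    by (rule valid_path_cat[OF vq st(3)]) (simp add: hr)
  have "valid_path V E s h (fst (v, take i as), snd (v, take i as) @ snd (fst q, snd q @ ?rest))"
    by (rule valid_path_cat[OF st(1)]) (use vs in \<open>simp_all add: st(2) sr\<close>)
  then show "valid_path V E s h (splice_at r q p i)" by (simp add: splice_at_def pv)
  have e1: "path_end h (fst (v, take i as), snd (v, take i as) @ snd (fst q, snd q @ ?rest))
      = path_end h (fst q, snd q @ ?rest)"
    by (rule path_end_cat) (simp add: st(2) sr)
  have e2: "path_end h (fst q, snd q @ snd (h r, ?rest)) = path_end h (h r, ?rest)"
    by (rule path_end_cat) (simp add: hr)
  have e3: "path_end h (fst (v, take i as), snd (v, take i as) @ snd (s r, [r] @ ?rest))
      = path_end h (s r, [r] @ ?rest)"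
    by (rule path_end_cat) (simp add: st(2))
  have e4: "path_end h (fst (s r, [r]), snd (s r, [r]) @ snd (h r, ?rest)) = path_end h (h r, ?rest)"
    by (rule path_end_cat) (simp add: path_end_def)
  have asd: "as = take i as @ [r] @ ?rest"
    using id_take_nth_drop[OF i'(1)] i'(2) by simp
  have "path_end h p = path_end h (v, take i as @ [r] @ ?rest)" using asd pv by simp
  also have "\<dots> = path_end h (h r, ?rest)" using e3 e4 by simp
  finally have ep: "path_end h p = path_end h (h r, ?rest)" .
  show "path_end h (splice_at r q p i) = path_end h p"
    using e1 e2 ep by (simp add: splice_at_def pv)
  show "fst (splice_at r q p i) = fst p" by (simp add: splice_at_def)
qed

lemma subst_arrow_in_pathalg:
  assumes arrow_ends: "\<forall>e\<in>E. s e \<in> V \<and> h e \<in> V"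
    and vq: "valid_path V E s h q" and sr: "s r = fst q" and hr: "h r = path_end h q"
    and p: "valid_path V E s h p"
  shows "subst_arrow r q p \<in> pathalg V E s h"
  unfolding subst_arrow_def
  by (rule PV.subspace_sum[OF pathalg_subspace], rule ind_in_pathalg,
      rule splice_at_props(1)[OF arrow_ends vq sr hr p])

lemma arrow_occs_append:
  "arrow_occs r (v, as @ bs) = arrow_occs r (v, as) \<union> (\<lambda>j. length as + j) ` arrow_occs r (w, bs)"
proof (rule set_eqI, rule iffI)
  fix i assume "i \<in> arrow_occs r (v, as @ bs)"
  then have i: "i < length as + length bs" "(as @ bs) ! i = r" by (auto simp: arrow_occs_def)
  show "i \<in> arrow_occs r (v, as) \<union> (\<lambda>j. length as + j) ` arrow_occs r (w, bs)"
  proof (cases "i < length as")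
    case True then show ?thesis using i by (auto simp: arrow_occs_def nth_append)
  next
    case False
    then have "i - length as \<in> arrow_occs r (w, bs)" "i = length as + (i - length as)"
      using i by (auto simp: arrow_occs_def nth_append)
    then show ?thesis by blast
  qed
next
  fix i assume "i \<in> arrow_occs r (v, as) \<union> (\<lambda>j. length as + j) ` arrow_occs r (w, bs)"
  then show "i \<in> arrow_occs r (v, as @ bs)" by (auto simp: arrow_occs_def nth_append)
qed

lemma subst_arrow_append:
  "subst_arrow r q (v, as @ bs)
    = (\<Sum>i\<in>arrow_occs r (v, as). ind (splice_at r q (v, as @ bs) i))
      + (\<Sum>j\<in>arrow_occs r (w, bs). ind (splice_at r q (v, as @ bs) (length as + j)))"
proof -
  have "arrow_occs r (v, as) \<inter> (\<lambda>j. length as + j) ` arrow_occs r (w, bs) = {}"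
    by (auto simp: arrow_occs_def)
  then have "subst_arrow r q (v, as @ bs)
      = (\<Sum>i\<in>arrow_occs r (v, as). ind (splice_at r q (v, as @ bs) i))
        + (\<Sum>i\<in>(\<lambda>j. length as + j) ` arrow_occs r (w, bs). ind (splice_at r q (v, as @ bs) i))"
    unfolding subst_arrow_def arrow_occs_append[of r v as bs w] by (intro sum.union_disjoint) auto
  moreover have "inj_on (\<lambda>j. length as + j) (arrow_occs r (w, bs))" by (auto simp: inj_on_def)
  ultimately show ?thesis by (simp add: sum.reindex)
qed

lemma subst_arrow_leibniz:
  assumes arrow_ends: "\<forall>e\<in>E. s e \<in> V \<and> h e \<in> V"
    and vq: "valid_path V E s h q" and sr: "s r = fst q" and hr: "h r = path_end h q"
    and va: "valid_path V E s h a" and vb: "valid_path V E s h b"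
  shows "lin_ext (subst_arrow r q) (pmul h (ind a) (ind b))
    = pmul h (subst_arrow r q a) (ind b) + pmul h (ind a) (subst_arrow r q b)"
proof -
  note sp = splice_at_props[OF arrow_ends vq sr hr]
  have L: "pmul h (subst_arrow r q a) (ind b)
      = (\<Sum>i\<in>arrow_occs r a. pmul h (ind (splice_at r q a i)) (ind b))"
    unfolding subst_arrow_def by (rule pmul_sum_left) auto
  have R: "pmul h (ind a) (subst_arrow r q b)
      = (\<Sum>j\<in>arrow_occs r b. pmul h (ind a) (ind (splice_at r q b j)))"
    unfolding subst_arrow_def by (rule pmul_sum_right) auto
  show ?thesis
  proof (cases "path_end h a = fst b")
    case False
    have z1: "pmul h (subst_arrow r q a) (ind b) = 0" unfolding L
      by (rule sum.neutral) (use False sp(2)[OF va] in \<open>auto simp: pmul_ind\<close>)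
    have z2: "pmul h (ind a) (subst_arrow r q b) = 0" unfolding R
      by (rule sum.neutral) (use False sp(3)[OF vb] in \<open>auto simp: pmul_ind\<close>)
    show ?thesis unfolding z1 z2 using False by (simp add: pmul_ind)
  next
    case True
    obtain v as where av: "a = (v, as)" by (cases a)
    obtain w bs where bv: "b = (w, bs)" by (cases b)
    have ew: "path_end h (v, as) = w" using True av bv by simp
    have "(\<Sum>i\<in>arrow_occs r (v, as). ind (splice_at r q (v, as @ bs) i))
        = (\<Sum>i\<in>arrow_occs r a. pmul h (ind (splice_at r q a i)) (ind b))"
    proof (rule sum.cong)
      fix i assume i: "i \<in> arrow_occs r a"
      then have "i < length as" using av by (auto simp: arrow_occs_def)
      moreover have "path_end h (splice_at r q a i) = fst b" using sp(2)[OF va i] av bv ew by simp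
      ultimately show "ind (splice_at r q (v, as @ bs) i) = pmul h (ind (splice_at r q a i)) (ind b)"
        by (simp add: pmul_ind splice_at_def av bv)
    qed (simp add: av)
    moreover have "(\<Sum>j\<in>arrow_occs r (w, bs). ind (splice_at r q (v, as @ bs) (length as + j)))
        = (\<Sum>j\<in>arrow_occs r b. pmul h (ind a) (ind (splice_at r q b j)))"
    proof (rule sum.cong)
      fix j assume j: "j \<in> arrow_occs r b"
      have "path_end h a = fst (splice_at r q b j)" using ew av bv by (simp add: splice_at_def)
      then show "ind (splice_at r q (v, as @ bs) (length as + j)) = pmul h (ind a) (ind (splice_at r q b j))"
        by (simp add: pmul_ind splice_at_def av bv)
    qed (simp add: bv)
    moreover have "lin_ext (subst_arrow r q) (pmul h (ind a) (ind b)) = subst_arrow r q (v, as @ bs)"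
      using True av bv by (simp add: pmul_ind)
    ultimately show ?thesis unfolding L R subst_arrow_append[of r q v as bs w] by metis
  qed
qed
lemma subst_arrow_vertex: "subst_arrow r q (v, []) = 0"
  by (simp add: subst_arrow_def arrow_occs_def)

lemma subst_arrow_arrow: "s r = fst q \<Longrightarrow> subst_arrow r q (s e, [e]) = (if e = r then ind q else 0)"
proof -
  assume sr: "s r = fst q"
  have "arrow_occs r (s e, [e]) = (if e = r then {0} else {})" by (auto simp: arrow_occs_def)
  then show ?thesis using sr by (auto simp: subst_arrow_def splice_at_def)
qed

section \<open>The quotient algebra and its derivations\<close>

locale quiver_quotient =
  fixes V :: "'v set" and E :: "'e set" and s h :: "'e \<Rightarrow> 'v"
    and I :: "(('v,'e) path \<Rightarrow> 'k::field) set" and Q :: "('v,'e) path set"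
  assumes arrow_ends: "\<forall>e\<in>E. s e \<in> V \<and> h e \<in> V"
    and ideal: "two_sided_ideal V E s h I"
    and basis: "path_class_basis V E s h I Q"
    and finite_E: "finite E"
begin

abbreviation P :: "(('v,'e) path \<Rightarrow> 'k) set" where "P \<equiv> pathalg V E s h"
abbreviation valid :: "('v,'e) path \<Rightarrow> bool" where "valid \<equiv> valid_path V E s h"
abbreviation mul :: "(('v,'e) path \<Rightarrow> 'k) \<Rightarrow> (('v,'e) path \<Rightarrow> 'k) \<Rightarrow> (('v,'e) path \<Rightarrow> 'k)"
  where "mul \<equiv> pmul h"
abbreviation DerS :: "((('v,'e) path \<Rightarrow> 'k) \<Rightarrow> (('v,'e) path \<Rightarrow> 'k)) set" where "DerS \<equiv> Der V E s h I"
abbreviation InnS :: "((('v,'e) path \<Rightarrow> 'k) \<Rightarrow> (('v,'e) path \<Rightarrow> 'k)) set" where "InnS \<equiv> Inn V E s h I"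
abbreviation Zc :: "(('v,'e) path \<Rightarrow> 'k) set" where "Zc \<equiv> center_rep V E s h I"

lemma P_subspace: "PV.subspace P" by (rule pathalg_subspace)
lemma P_fin_supp: "x \<in> P \<Longrightarrow> fin_supp x" by (rule pathalg_fin_supp)

lemma I_subset_P: "I \<subseteq> P" using ideal by (simp add: two_sided_ideal_def)

lemma I_subspace: "PV.subspace I"
  using ideal unfolding two_sided_ideal_def PV.subspace_def padd_eq pzero_eq by auto

lemma I_0[simp]: "0 \<in> I" using I_subspace by (rule PV.subspace_0)
lemma I_add: "x \<in> I \<Longrightarrow> y \<in> I \<Longrightarrow> x + y \<in> I" using I_subspace by (rule PV.subspace_add)
lemma I_diff: "x \<in> I \<Longrightarrow> y \<in> I \<Longrightarrow> x - y \<in> I" using I_subspace by (rule PV.subspace_diff)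
lemma I_psc: "x \<in> I \<Longrightarrow> psc c x \<in> I" using I_subspace by (rule PV.subspace_scale)
lemma I_neg: "x \<in> I \<Longrightarrow> - x \<in> I" using I_subspace by (rule PV.subspace_neg)
lemma I_sum: "(\<And>i. i \<in> A \<Longrightarrow> F i \<in> I) \<Longrightarrow> (\<Sum>i\<in>A. F i) \<in> I"
  using I_subspace by (rule PV.subspace_sum)
lemma I_mul_left: "x \<in> I \<Longrightarrow> a \<in> P \<Longrightarrow> mul a x \<in> I"
  using ideal by (simp add: two_sided_ideal_def)
lemma I_mul_right: "x \<in> I \<Longrightarrow> a \<in> P \<Longrightarrow> mul x a \<in> I"
  using ideal by (simp add: two_sided_ideal_def)

lemma P_add: "x \<in> P \<Longrightarrow> y \<in> P \<Longrightarrow> x + y \<in> P" using P_subspace by (rule PV.subspace_add)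
lemma P_diff: "x \<in> P \<Longrightarrow> y \<in> P \<Longrightarrow> x - y \<in> P" using P_subspace by (rule PV.subspace_diff)
lemma P_psc: "x \<in> P \<Longrightarrow> psc c x \<in> P" using P_subspace by (rule PV.subspace_scale)
lemma P_0[simp]: "0 \<in> P" using P_subspace by (rule PV.subspace_0)
lemma P_sum: "(\<And>i. i \<in> A \<Longrightarrow> F i \<in> P) \<Longrightarrow> (\<Sum>i\<in>A. F i) \<in> P"
  using P_subspace by (rule PV.subspace_sum)

lemma P_mul: "x \<in> P \<Longrightarrow> y \<in> P \<Longrightarrow> mul x y \<in> P"
  by (rule pmul_in_pathalg)

lemma vertex_in_P: "v \<in> V \<Longrightarrow> ind (v, []) \<in> P"
  by (rule ind_in_pathalg) (simp add: valid_path_def)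

lemma arrow_in_P: "e \<in> E \<Longrightarrow> ind (s e, [e]) \<in> P"
  by (rule ind_in_pathalg) (use arrow_ends in \<open>auto simp: valid_path_def\<close>)

definition comb :: "(('v,'e) path \<Rightarrow> 'k) \<Rightarrow> ('v,'e) path set \<Rightarrow> (('v,'e) path \<Rightarrow> 'k)" where
  "comb c A = (\<Sum>q\<in>A. psc (c q) (ind q))"

lemma finite_Q: "finite Q" using basis by (simp add: path_class_basis_def)
lemma Q_valid: "q \<in> Q \<Longrightarrow> valid q" using basis by (simp add: path_class_basis_def)

lemma comb_fun: "(\<lambda>r. \<Sum>q\<in>A. c q * ind q r) = comb c A"
  by (simp add: comb_def fun_eq_iff sum_fun_apply)

lemma Q_span: "x \<in> P \<Longrightarrow> \<exists>c. x - comb c Q \<in> I"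
  using basis unfolding path_class_basis_def comb_fun psub_eq by blast

lemma Q_indep: "comb c Q \<in> I \<Longrightarrow> q \<in> Q \<Longrightarrow> c q = 0"
  using basis unfolding path_class_basis_def comb_fun by blast

lemma comb_extend: "A \<subseteq> Q \<Longrightarrow> comb c A = comb (\<lambda>q. if q \<in> A then c q else 0) Q"
  unfolding comb_def using finite_Q by (intro sum.mono_neutral_cong_left) auto

lemma comb_in_I_coeff: "A \<subseteq> Q \<Longrightarrow> comb c A \<in> I \<Longrightarrow> q \<in> A \<Longrightarrow> c q = 0"
  using Q_indep[of "\<lambda>q. if q \<in> A then c q else 0" q] comb_extend[of A c] by auto

lemma comb_in_P: "A \<subseteq> Q \<Longrightarrow> comb c A \<in> P"
  unfolding comb_def by (auto intro!: P_sum P_psc ind_in_pathalg Q_valid)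

lemma comb_diff: "comb c A - comb d A = comb (\<lambda>q. c q - d q) A"
  by (simp add: comb_def fun_eq_iff sum_fun_apply sum_subtractf[symmetric] algebra_simps)

lemma comb_add: "comb c A + comb d A = comb (\<lambda>q. c q + d q) A"
  by (simp add: comb_def fun_eq_iff sum_fun_apply sum.distrib[symmetric] algebra_simps)

lemma comb_cong: "(\<And>q. q \<in> A \<Longrightarrow> c q = d q) \<Longrightarrow> comb c A = comb d A"
  unfolding comb_def by (rule sum.cong) auto

lemma comb_in_span: "comb c A \<in> PV.span (ind ` A)"
  unfolding comb_def by (rule PV.span_sum, rule PV.span_scale, rule PV.span_base) auto

lemma pmul_ind_vertex: "mul (ind q) (ind (v, [])) = (if path_end h q = v then ind q else 0)"
  by (simp add: pmul_ind)

lemma pmul_vertex_ind: "mul (ind (v, [])) (ind q) = (if fst q = v then ind q else 0)"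
  by (auto simp: pmul_ind path_end_def)

lemma comb_mul_vertex: "mul (comb c A) (ind (v, [])) = comb (\<lambda>q. if path_end h q = v then c q else 0) A"
proof -
  have "mul (comb c A) (ind (v, [])) = (\<Sum>q\<in>A. psc (c q) (mul (ind q) (ind (v, []))))"
    unfolding comb_def by (rule pmul_sum_psc_left) auto
  moreover have "psc (c q) (mul (ind q) (ind (v, []))) = psc (if path_end h q = v then c q else 0) (ind q)" for q
    unfolding pmul_ind_vertex by (auto simp: fun_eq_iff)
  ultimately show ?thesis unfolding comb_def by simp
qed

lemma vertex_mul_comb: "mul (ind (v, [])) (comb c A) = comb (\<lambda>q. if fst q = v then c q else 0) A"
proof -
  have "mul (ind (v, [])) (comb c A) = (\<Sum>q\<in>A. psc (c q) (mul (ind (v, [])) (ind q)))"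
    unfolding comb_def by (rule pmul_sum_psc_right) auto
  moreover have "psc (c q) (mul (ind (v, [])) (ind q)) = psc (if fst q = v then c q else 0) (ind q)" for q
    unfolding pmul_vertex_ind by (auto simp: fun_eq_iff)
  ultimately show ?thesis unfolding comb_def by simp
qed

definition I_valued :: "((('v,'e) path \<Rightarrow> 'k) \<Rightarrow> (('v,'e) path \<Rightarrow> 'k)) set" where
  "I_valued = {D. \<forall>x\<in>P. D x \<in> I}"

text \<open>The zero of Der(k Gamma, k Gamma/I) in the chosen representation by k Gamma-valued maps.\<close>

definition Der_I :: "((('v,'e) path \<Rightarrow> 'k) \<Rightarrow> (('v,'e) path \<Rightarrow> 'k)) set" where
  "Der_I = DerS \<inter> I_valued"

definition ad :: "(('v,'e) path \<Rightarrow> 'k) \<Rightarrow> (('v,'e) path \<Rightarrow> 'k) \<Rightarrow> (('v,'e) path \<Rightarrow> 'k)" where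
  "ad m = (\<lambda>x. if x \<in> P then mul m x - mul x m else 0)"

lemma Der_iff: "D \<in> DerS \<longleftrightarrow> (\<forall>x\<in>P. D x \<in> P)
   \<and> (\<forall>x\<in>P. \<forall>y\<in>P. D (x + y) - (D x + D y) \<in> I)
   \<and> (\<forall>c. \<forall>x\<in>P. D (psc c x) - psc c (D x) \<in> I)
   \<and> (\<forall>x\<in>P. \<forall>y\<in>P. D (mul x y) - (mul (D x) y + mul x (D y)) \<in> I)"
  by (simp add: Der_def diff_op_def psub_eq padd_eq)

lemma DerD:
  assumes "D \<in> DerS"
  shows "\<And>x. x \<in> P \<Longrightarrow> D x \<in> P"
    "\<And>x y. x \<in> P \<Longrightarrow> y \<in> P \<Longrightarrow> D (x + y) - (D x + D y) \<in> I"
    "\<And>c x. x \<in> P \<Longrightarrow> D (psc c x) - psc c (D x) \<in> I"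
    "\<And>x y. x \<in> P \<Longrightarrow> y \<in> P \<Longrightarrow> D (mul x y) - (mul (D x) y + mul x (D y)) \<in> I"
  using assms unfolding Der_iff by blast+

lemma DerI:
  assumes "\<And>x. x \<in> P \<Longrightarrow> D x \<in> P"
    "\<And>x y. x \<in> P \<Longrightarrow> y \<in> P \<Longrightarrow> D (x + y) - (D x + D y) \<in> I"
    "\<And>c x. x \<in> P \<Longrightarrow> D (psc c x) - psc c (D x) \<in> I"
    "\<And>x y. x \<in> P \<Longrightarrow> y \<in> P \<Longrightarrow> D (mul x y) - (mul (D x) y + mul x (D y)) \<in> I"
  shows "D \<in> DerS"
  unfolding Der_iff using assms by blast

lemma Der_add:
  assumes D1: "D1 \<in> DerS" and D2: "D2 \<in> DerS"
  shows "D1 + D2 \<in> DerS"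
proof (rule DerI)
  fix x assume "x \<in> P" then show "(D1 + D2) x \<in> P" using DerD(1)[OF D1] DerD(1)[OF D2] by (auto intro: P_add)
next
  fix x y assume x: "x \<in> P" and y: "y \<in> P"
  have eq: "(D1 + D2) (x + y) - ((D1 + D2) x + (D1 + D2) y)
    = (D1 (x + y) - (D1 x + D1 y)) + (D2 (x + y) - (D2 x + D2 y))"
    by (simp add: algebra_simps)
  show "(D1 + D2) (x + y) - ((D1 + D2) x + (D1 + D2) y) \<in> I"
    unfolding eq by (rule I_add[OF DerD(2)[OF D1 x y] DerD(2)[OF D2 x y]])
next
  fix c x assume x: "x \<in> P"
  have eq: "(D1 + D2) (psc c x) - psc c ((D1 + D2) x)
    = (D1 (psc c x) - psc c (D1 x)) + (D2 (psc c x) - psc c (D2 x))"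
    by (simp add: algebra_simps fun_eq_iff)
  show "(D1 + D2) (psc c x) - psc c ((D1 + D2) x) \<in> I"
    unfolding eq by (rule I_add[OF DerD(3)[OF D1 x] DerD(3)[OF D2 x]])
next
  fix x y assume x: "x \<in> P" and y: "y \<in> P"
  have fx: "fin_supp (D1 x)" "fin_supp (D2 x)" "fin_supp (D1 y)" "fin_supp (D2 y)" "fin_supp x" "fin_supp y"
    using DerD(1)[OF D1] DerD(1)[OF D2] x y by (auto intro: P_fin_supp)
  have eq: "(D1 + D2) (mul x y) - (mul ((D1 + D2) x) y + mul x ((D1 + D2) y))
    = (D1 (mul x y) - (mul (D1 x) y + mul x (D1 y))) + (D2 (mul x y) - (mul (D2 x) y + mul x (D2 y)))"
    using fx by (simp add: pmul_add_left pmul_add_right algebra_simps)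
  show "(D1 + D2) (mul x y) - (mul ((D1 + D2) x) y + mul x ((D1 + D2) y)) \<in> I"
    unfolding eq by (rule I_add[OF DerD(4)[OF D1 x y] DerD(4)[OF D2 x y]])
qed

lemma Der_scale:
  assumes D: "D \<in> DerS"
  shows "Dsc c D \<in> DerS"
proof (rule DerI)
  fix x assume "x \<in> P" then show "Dsc c D x \<in> P" using DerD(1)[OF D] by (auto intro: P_psc)
next
  fix x y assume x: "x \<in> P" and y: "y \<in> P"
  have eq: "Dsc c D (x + y) - (Dsc c D x + Dsc c D y) = psc c (D (x + y) - (D x + D y))"
    by (simp add: fun_eq_iff algebra_simps)
  show "Dsc c D (x + y) - (Dsc c D x + Dsc c D y) \<in> I" unfolding eq by (rule I_psc[OF DerD(2)[OF D x y]])
next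
  fix a x assume x: "x \<in> P"
  have eq: "Dsc c D (psc a x) - psc a (Dsc c D x) = psc c (D (psc a x) - psc a (D x))"
    by (simp add: fun_eq_iff algebra_simps)
  show "Dsc c D (psc a x) - psc a (Dsc c D x) \<in> I" unfolding eq by (rule I_psc[OF DerD(3)[OF D x]])
next
  fix x y assume x: "x \<in> P" and y: "y \<in> P"
  have fx: "fin_supp (D x)" "fin_supp (D y)" "fin_supp x" "fin_supp y" using DerD(1)[OF D] x y by (auto intro: P_fin_supp)
  have eq: "Dsc c D (mul x y) - (mul (Dsc c D x) y + mul x (Dsc c D y))
    = psc c (D (mul x y) - (mul (D x) y + mul x (D y)))"
    using fx by (simp add: pmul_psc_left pmul_psc_right fun_eq_iff algebra_simps)
  show "Dsc c D (mul x y) - (mul (Dsc c D x) y + mul x (Dsc c D y)) \<in> I"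
    unfolding eq by (rule I_psc[OF DerD(4)[OF D x y]])
qed

lemma Der_subspace: "DV.subspace DerS"
  unfolding DV.subspace_def by (auto intro: DerI Der_add Der_scale)

lemma I_valued_subspace: "DV.subspace I_valued"
  unfolding DV.subspace_def I_valued_def by (auto intro: I_add I_psc)

lemma Der_I_subspace: "DV.subspace Der_I"
  using Der_subspace I_valued_subspace unfolding Der_I_def DV.subspace_def by auto

lemma ad_apply: "x \<in> P \<Longrightarrow> ad m x = mul m x - mul x m"
  by (simp add: ad_def)

lemma ad_in_Der:
  assumes m: "m \<in> P"
  shows "ad m \<in> DerS"
proof (rule DerI)
  fix x assume x: "x \<in> P"
  show "ad m x \<in> P" using x m by (simp add: ad_apply P_diff P_mul)
next
  fix x y assume x: "x \<in> P" and y: "y \<in> P"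
  have "ad m (x + y) = ad m x + ad m y"
    using x y m by (simp add: ad_apply P_add pmul_add_left pmul_add_right P_fin_supp algebra_simps)
  then show "ad m (x + y) - (ad m x + ad m y) \<in> I" by simp
next
  fix c x assume x: "x \<in> P"
  have "ad m (psc c x) = psc c (ad m x)"
    using x m
    by (simp add: ad_apply P_psc pmul_psc_left pmul_psc_right P_fin_supp PV.scale_right_diff_distrib)
  then show "ad m (psc c x) - psc c (ad m x) \<in> I" by simp
next
  fix x y assume x: "x \<in> P" and y: "y \<in> P"
  have "fin_supp x" "fin_supp y" "fin_supp m" using x y m by (auto intro: P_fin_supp)
  then have "ad m (mul x y) = mul (ad m x) y + mul x (ad m y)"
    using x y by (simp add: ad_apply P_mul fin_supp_pmul pmul_diff_left pmul_diff_right pmul_assoc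
        algebra_simps)
  then show "ad m (mul x y) - (mul (ad m x) y + mul x (ad m y)) \<in> I" by simp
qed

lemma ad_add: "m1 \<in> P \<Longrightarrow> m2 \<in> P \<Longrightarrow> ad (m1 + m2) = ad m1 + ad m2"
  by (rule ext) (auto simp: ad_def pmul_add_left pmul_add_right P_fin_supp)

lemma ad_psc: "m \<in> P \<Longrightarrow> ad (psc c m) = Dsc c (ad m)"
  by (rule ext) (auto simp: ad_def pmul_psc_left pmul_psc_right P_fin_supp PV.scale_right_diff_distrib)

lemma ad_zero: "ad 0 = 0"
  by (rule ext) (simp add: ad_def)

lemma Inn_iff: "D \<in> InnS \<longleftrightarrow> D \<in> DerS \<and> (\<exists>m\<in>P. D - ad m \<in> I_valued)"
  by (simp add: Inn_def I_valued_def psub_eq ad_def)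

lemma Zc_iff: "z \<in> Zc \<longleftrightarrow> z \<in> P \<and> ad z \<in> I_valued"
  by (simp add: center_rep_def I_valued_def psub_eq ad_def)

lemma Inn_subspace: "DV.subspace InnS"
  unfolding DV.subspace_def
proof (intro conjI ballI allI)
  show "0 \<in> InnS" unfolding Inn_iff
    using DV.subspace_0[OF Der_subspace] DV.subspace_0[OF I_valued_subspace] by (auto intro!: bexI[of _ 0] simp: ad_zero)
next
  fix D1 D2 assume "D1 \<in> InnS" "D2 \<in> InnS"
  then obtain m1 m2 where D: "D1 \<in> DerS" "D2 \<in> DerS" and m: "m1 \<in> P" "m2 \<in> P"
    "D1 - ad m1 \<in> I_valued" "D2 - ad m2 \<in> I_valued" unfolding Inn_iff by blast
  have eq: "(D1 + D2) - ad (m1 + m2) = (D1 - ad m1) + (D2 - ad m2)"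
    using m by (simp add: ad_add)
  have "(D1 + D2) - ad (m1 + m2) \<in> I_valued" unfolding eq by (rule DV.subspace_add[OF I_valued_subspace m(3) m(4)])
  then show "D1 + D2 \<in> InnS" unfolding Inn_iff
    using D m DV.subspace_add[OF Der_subspace] P_add by blast
next
  fix c D assume "D \<in> InnS"
  then obtain m where D: "D \<in> DerS" and m: "m \<in> P" "D - ad m \<in> I_valued" unfolding Inn_iff by blast
  have eq: "Dsc c D - ad (psc c m) = Dsc c (D - ad m)"
    using m by (simp add: ad_psc DV.scale_right_diff_distrib)
  have "Dsc c D - ad (psc c m) \<in> I_valued" unfolding eq by (rule DV.subspace_scale[OF I_valued_subspace m(2)])
  then show "Dsc c D \<in> InnS" unfolding Inn_iff
    using D m DV.subspace_scale[OF Der_subspace] P_psc by blast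
qed

lemma Zc_subspace: "PV.subspace Zc"
  unfolding PV.subspace_def
proof (intro conjI ballI allI)
  show "0 \<in> Zc" unfolding Zc_iff using DV.subspace_0[OF I_valued_subspace] by (simp add: ad_zero)
next
  fix x y assume "x \<in> Zc" "y \<in> Zc"
  then show "x + y \<in> Zc" unfolding Zc_iff
    using DV.subspace_add[OF I_valued_subspace] by (simp add: ad_add P_add)
next
  fix c x assume "x \<in> Zc"
  then show "psc c x \<in> Zc" unfolding Zc_iff
    using DV.subspace_scale[OF I_valued_subspace] by (simp add: ad_psc P_psc)
qed

lemma I_subset_Zc: "I \<subseteq> Zc"
proof
  fix z assume z: "z \<in> I"
  then have zP: "z \<in> P" using I_subset_P by blast
  have "ad z x \<in> I" if x: "x \<in> P" for x
    unfolding ad_apply[OF x] by (rule I_diff[OF I_mul_right[OF z x] I_mul_left[OF z x]])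
  then have "ad z \<in> I_valued" unfolding I_valued_def by blast
  then show "z \<in> Zc" using zP Zc_iff by blast
qed

lemma Zc_subset_P: "Zc \<subseteq> P" using Zc_iff by blast

lemma Der_I_subset_Inn: "Der_I \<subseteq> InnS"
proof
  fix D assume "D \<in> Der_I"
  then have "D \<in> DerS" "D - ad 0 \<in> I_valued" by (auto simp: Der_I_def ad_zero)
  then show "D \<in> InnS" unfolding Inn_iff using P_0 by blast
qed

lemma Inn_subset_Der: "InnS \<subseteq> DerS" using Inn_iff by blast

lemma P_span_mod: "P \<subseteq> PV.span_mod (ind ` Q) I"
proof
  fix x assume "x \<in> P"
  then obtain c where "x - comb c Q \<in> I" using Q_span by blast
  then show "x \<in> PV.span_mod (ind ` Q) I" unfolding PV.span_mod_def using comb_in_span by blast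
qed

lemma dim_P: "qdim psc (+) 0 P I = card Q"
proof (rule PV.qdim_eq_card[OF I_subspace finite_Q])
  show "ind ` Q \<subseteq> P" by (auto intro: ind_in_pathalg Q_valid)
  show "\<forall>q\<in>Q. c q = 0" if "(\<Sum>q\<in>Q. psc (c q) (ind q)) \<in> I" for c
    using that Q_indep unfolding comb_def by blast
qed (rule P_span_mod)

lemma dim_add_center: "qdim psc (+) 0 P I = qdim psc (+) 0 P Zc + qdim psc (+) 0 Zc I"
  by (rule PV.qdim_add[OF I_subspace Zc_subspace P_subspace I_subset_Zc Zc_subset_P _ P_span_mod]) (simp add: finite_Q)

lemma dim_Inn: "qdim Dsc (+) 0 InnS Der_I = qdim psc (+) 0 P Zc"
proof (rule PDV.qdim_eq_linear_iso_mod[OF Zc_subspace P_subspace Zc_subset_P Der_I_subspace _ _, where \<phi> = ad and B = "ind ` Q"])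
  show "finite (ind ` Q)" using finite_Q by simp
  show "P \<subseteq> PV.span_mod (ind ` Q) Zc" using P_span_mod PV.span_mod_mono[OF I_subset_Zc] by blast
  show "\<And>x y. x \<in> P \<Longrightarrow> y \<in> P \<Longrightarrow> ad (x + y) = ad x + ad y" by (rule ad_add)
  show "\<And>c x. x \<in> P \<Longrightarrow> ad (psc c x) = Dsc c (ad x)" by (rule ad_psc)
  show "\<And>x. x \<in> P \<Longrightarrow> ad x \<in> InnS"
  proof -
    fix x assume x: "x \<in> P"
    have "ad x - ad x \<in> I_valued" using DV.subspace_0[OF I_valued_subspace] by simp
    then show "ad x \<in> InnS" unfolding Inn_iff using ad_in_Der[OF x] x by blast
  qed
  show "\<And>y. y \<in> InnS \<Longrightarrow> \<exists>x\<in>P. y - ad x \<in> Der_I"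
    unfolding Inn_iff Der_I_def using ad_in_Der DV.subspace_diff[OF Der_subspace] by blast
  show "\<And>x. x \<in> P \<Longrightarrow> ad x \<in> Der_I \<longleftrightarrow> x \<in> Zc"
    unfolding Der_I_def Zc_iff using ad_in_Der by blast
qed

lemma Der_zero: "D \<in> DerS \<Longrightarrow> D 0 \<in> I"
proof -
  assume D: "D \<in> DerS"
  have "D (0 + 0) - (D 0 + D 0) \<in> I" using DerD(2)[OF D P_0 P_0] .
  then have "- D 0 \<in> I" by simp
  then show "D 0 \<in> I" using I_neg by fastforce
qed

lemma pmul_cong_left: "a - b \<in> I \<Longrightarrow> a \<in> P \<Longrightarrow> b \<in> P \<Longrightarrow> y \<in> P \<Longrightarrow> mul a y - mul b y \<in> I"
  by (subst pmul_diff_left[symmetric]) (auto intro: P_fin_supp I_mul_right)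

lemma pmul_cong_right: "a - b \<in> I \<Longrightarrow> a \<in> P \<Longrightarrow> b \<in> P \<Longrightarrow> y \<in> P \<Longrightarrow> mul y a - mul y b \<in> I"
  by (subst pmul_diff_right[symmetric]) (auto intro: P_fin_supp I_mul_left)

lemma Der_sum:
  assumes D: "D \<in> DerS" and F: "\<And>i. i \<in> A \<Longrightarrow> F i \<in> P"
  shows "D (\<Sum>i\<in>A. F i) - (\<Sum>i\<in>A. D (F i)) \<in> I"
  using F
proof (induct A rule: infinite_finite_induct)
  case (infinite A) then show ?case using Der_zero[OF D] by (simp only: sum.infinite diff_zero not_False_eq_True)
next
  case empty then show ?case using Der_zero[OF D] by (simp only: sum.empty diff_zero)
next
  case (insert a A)
  have FA: "(\<Sum>i\<in>A. F i) \<in> P" using insert by (auto intro: P_sum)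
  have Fa: "F a \<in> P" using insert by auto
  have eq: "D (\<Sum>i\<in>insert a A. F i) - (\<Sum>i\<in>insert a A. D (F i))
    = (D (F a + (\<Sum>i\<in>A. F i)) - (D (F a) + D (\<Sum>i\<in>A. F i))) + (D (\<Sum>i\<in>A. F i) - (\<Sum>i\<in>A. D (F i)))"
    using insert(1,2) by (simp add: algebra_simps)
  show ?case unfolding eq
    by (rule I_add[OF DerD(2)[OF D Fa FA] insert(3)]) (use insert in auto)
qed

lemma Der_mul_in_I:
  assumes D: "D \<in> DerS" and x: "x \<in> P" and y: "y \<in> P" and Dx: "D x \<in> I" and Dy: "D y \<in> I"
  shows "D (mul x y) \<in> I"
proof -
  have "D (mul x y) = (D (mul x y) - (mul (D x) y + mul x (D y))) + (mul (D x) y + mul x (D y))"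
    by simp
  also have "\<dots> \<in> I" by (intro I_add DerD(4)[OF D x y] I_mul_right[OF Dx y] I_mul_left[OF Dy x])
  finally show ?thesis .
qed

lemma Der_psc_in_I:
  assumes D: "D \<in> DerS" and x: "x \<in> P" and Dx: "D x \<in> I"
  shows "D (psc c x) \<in> I"
proof -
  have "D (psc c x) = (D (psc c x) - psc c (D x)) + psc c (D x)" by simp
  also have "\<dots> \<in> I" by (intro I_add DerD(3)[OF D x] I_psc[OF Dx])
  finally show ?thesis .
qed

lemma Der_path_in_I:
  assumes D: "D \<in> DerS" and vv: "\<And>v. v \<in> V \<Longrightarrow> D (ind (v, [])) \<in> I"
    and ve: "\<And>e. e \<in> E \<Longrightarrow> D (ind (s e, [e])) \<in> I" and p: "valid (v, as)"
  shows "D (ind (v, as)) \<in> I"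
  using p
proof (induct as rule: rev_induct)
  case Nil
  then show ?case using vv valid_path_start by fastforce
next
  case (snoc e as)
  note vs = valid_path_snocD[OF snoc(2)]
  have "ind (v, as @ [e]) = mul (ind (v, as)) (ind (s e, [e]))"
    using vs(3) by (simp add: pmul_ind)
  then show ?case
    using Der_mul_in_I[OF D ind_in_pathalg[OF vs(1)] arrow_in_P[OF vs(2)] snoc(1)[OF vs(1)] ve[OF vs(2)]]
    by simp
qed

lemma Der_I_valuedI:
  assumes D: "D \<in> DerS" and vv: "\<And>v. v \<in> V \<Longrightarrow> D (ind (v, [])) \<in> I"
    and ve: "\<And>e. e \<in> E \<Longrightarrow> D (ind (s e, [e])) \<in> I"
  shows "D \<in> I_valued"
  unfolding I_valued_def
proof (intro CollectI ballI)
  fix x assume x: "x \<in> P"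
  let ?A = "{p. x p \<noteq> 0}"
  have valid: "valid p" if "p \<in> ?A" for p using pathalg_valid[OF x] that by simp
  have "x = (\<Sum>p\<in>?A. psc (x p) (ind p))"
    using P_fin_supp[OF x] by (intro fin_supp_expand) (auto simp: fin_supp_def)
  moreover have "D (\<Sum>p\<in>?A. psc (x p) (ind p)) - (\<Sum>p\<in>?A. D (psc (x p) (ind p))) \<in> I"
    using valid by (intro Der_sum[OF D] P_psc ind_in_pathalg)
  moreover have "(\<Sum>p\<in>?A. D (psc (x p) (ind p))) \<in> I"
    using valid Der_path_in_I[OF D vv ve]
    by (intro I_sum Der_psc_in_I[OF D] ind_in_pathalg) (auto simp: split_paired_all)
  ultimately show "D x \<in> I" using I_add by fastforce
qed

text \<open>D_arrow r q is the paper's D_{r,q}, and parallel_pairs indexes B_2.\<close>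

definition D_arrow :: "'e \<Rightarrow> ('v,'e) path \<Rightarrow> (('v,'e) path \<Rightarrow> 'k) \<Rightarrow> (('v,'e) path \<Rightarrow> 'k)" where
  "D_arrow r q = lin_ext (subst_arrow r q)"

definition parallel_pairs :: "('e \<times> ('v,'e) path) set" where
  "parallel_pairs = {(r, q). r \<in> E \<and> q \<in> Q \<and> s r = path_start q \<and> h r = path_end h q}"

lemma parallel_pairsD: "(r, q) \<in> parallel_pairs \<Longrightarrow> r \<in> E \<and> q \<in> Q \<and> s r = fst q \<and> h r = path_end h q"
  by (simp add: parallel_pairs_def path_start_def)

lemma lin_ext_in_Der:
  assumes P: "\<And>p. valid p \<Longrightarrow> \<delta> p \<in> P" and fin: "\<And>p. fin_supp (\<delta> p)"
    and leibniz: "\<And>a b. valid a \<Longrightarrow> valid b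
      \<Longrightarrow> lin_ext \<delta> (mul (ind a) (ind b)) = mul (\<delta> a) (ind b) + mul (ind a) (\<delta> b)"
  shows "lin_ext \<delta> \<in> DerS"
proof (rule DerI)
  fix x assume "x \<in> P"
  then show "lin_ext \<delta> x \<in> P" using P by (rule lin_ext_in_pathalg)
next
  fix x y assume "x \<in> P" "y \<in> P"
  then show "lin_ext \<delta> (x + y) - (lin_ext \<delta> x + lin_ext \<delta> y) \<in> I"
    by (simp add: lin_ext_add P_fin_supp)
next
  fix c x assume "x \<in> P"
  then show "lin_ext \<delta> (psc c x) - psc c (lin_ext \<delta> x) \<in> I"
    by (simp add: lin_ext_psc P_fin_supp)
next
  fix x y assume x: "x \<in> P" and y: "y \<in> P"
  have "lin_ext \<delta> (mul x y) = mul (lin_ext \<delta> x) y + mul x (lin_ext \<delta> y)"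
    using fin P_fin_supp[OF x] P_fin_supp[OF y]
    by (rule lin_ext_leibniz) (use leibniz pathalg_valid[OF x] pathalg_valid[OF y] in blast)
  then show "lin_ext \<delta> (mul x y) - (mul (lin_ext \<delta> x) y + mul x (lin_ext \<delta> y)) \<in> I"
    by simp
qed

lemma D_arrow_in_Der:
  assumes rq: "(r, q) \<in> parallel_pairs"
  shows "D_arrow r q \<in> DerS"
proof -
  have vq: "valid q" and sr: "s r = fst q" and hr: "h r = path_end h q"
    using parallel_pairsD[OF rq] Q_valid by auto
  show ?thesis unfolding D_arrow_def
    by (rule lin_ext_in_Der[OF subst_arrow_in_pathalg[OF arrow_ends vq sr hr] fin_supp_subst_arrow
          subst_arrow_leibniz[OF arrow_ends vq sr hr]])
qed

lemma D_arrow_vertex: "D_arrow r q (ind (v, [])) = 0" by (simp add: D_arrow_def subst_arrow_vertex fun_eq_iff)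

lemma D_arrow_arrow: "s r = fst q \<Longrightarrow> D_arrow r q (ind (s e, [e])) = (if e = r then ind q else 0)"
  by (simp add: D_arrow_def subst_arrow_arrow)

lemma ind_notin_I: "q \<in> Q \<Longrightarrow> ind q \<notin> I"
proof
  assume q: "q \<in> Q" and "ind q \<in> I"
  then have "comb (\<lambda>_. 1) {q} \<in> I" by (simp add: comb_def)
  from comb_in_I_coeff[OF _ this] q show False by simp
qed

lemma ind_diff_notin_I: "q \<in> Q \<Longrightarrow> q' \<in> Q \<Longrightarrow> q \<noteq> q' \<Longrightarrow> ind q - ind q' \<notin> I"
proof
  assume q: "q \<in> Q" "q' \<in> Q" "q \<noteq> q'" and "ind q - ind q' \<in> I"
  moreover have "comb (\<lambda>x. if x = q then 1 else -1) {q, q'} = ind q - ind q'"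
    using q(3) by (simp add: comb_def psc_minus_one)
  ultimately have "comb (\<lambda>x. if x = q then 1 else -1) {q, q'} \<in> I" by simp
  from comb_in_I_coeff[OF _ this, of q] q show False by simp
qed

lemma D_arrow_in_Dop: assumes rq: "(r, q) \<in> parallel_pairs" shows "D_arrow r q \<in> Dop V E s h I r q"
proof -
  have sr: "s r = fst q" using parallel_pairsD[OF rq] by simp
  show ?thesis unfolding Dop_def using D_arrow_in_Der[OF rq]
    by (simp add: D_arrow_arrow[OF sr] D_arrow_vertex psub_eq)
qed

lemma card_B2: "card (B2 V E s h I Q) = card parallel_pairs"
proof -
  have B2: "B2 V E s h I Q = (\<lambda>(r, q). Dop V E s h I r q) ` parallel_pairs"
    by (simp add: B2_def parallel_pairs_def)
  have "inj_on (\<lambda>(r, q). Dop V E s h I r q) parallel_pairs"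
  proof (rule inj_onI, clarify)
    fix r q r' q' assume rq: "(r, q) \<in> parallel_pairs" and rq': "(r', q') \<in> parallel_pairs"
      and eq: "Dop V E s h I r q = Dop V E s h I r' q'"
    have sr: "s r = fst q" and q: "q \<in> Q" and r: "r \<in> E" using parallel_pairsD[OF rq] by auto
    have q': "q' \<in> Q" using parallel_pairsD[OF rq'] by auto
    have "D_arrow r q \<in> Dop V E s h I r' q'" using D_arrow_in_Dop[OF rq] eq by simp
    then have d1: "D_arrow r q (ind (s r', [r'])) - ind q' \<in> I"
      and d2: "\<forall>e\<in>E. e \<noteq> r' \<longrightarrow> D_arrow r q (ind (s e, [e])) \<in> I"
      by (auto simp: Dop_def psub_eq)
    show "r = r' \<and> q = q'"
    proof (cases "r = r'")
      case False
      then have "ind q \<in> I" using d2 r D_arrow_arrow[OF sr, of r] by auto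
      then show ?thesis using ind_notin_I[OF q] by simp
    next
      case True
      then have "ind q - ind q' \<in> I" using d1 D_arrow_arrow[OF sr, of r] by simp
      then show ?thesis using ind_diff_notin_I[OF q q'] True by blast
    qed
  qed
  then show ?thesis unfolding B2 by (rule card_image)
qed

definition Q_open :: "('v,'e) path set" where "Q_open = Q - QC h Q"

lemma card_QC_add_card_Q_open: "card (QC h Q) + card Q_open = card Q"
proof -
  have "QC h Q \<subseteq> Q" by (auto simp: QC_def)
  then show ?thesis unfolding Q_open_def using finite_Q
    by (metis card_Diff_subset card_mono finite_subset le_add_diff_inverse)
qed

lemma Q_open_iff: "q \<in> Q_open \<longleftrightarrow> q \<in> Q \<and> fst q \<noteq> path_end h q"
  by (auto simp: Q_open_def QC_def path_start_def)

lemma finite_parallel_pairs: "finite parallel_pairs"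
  by (rule finite_subset[of _ "E \<times> Q"]) (auto simp: parallel_pairs_def finite_Q finite_E)

lemma finite_Q_open: "finite Q_open" using finite_Q by (simp add: Q_open_def)

lemma Q_open_subset: "Q_open \<subseteq> Q" by (auto simp: Q_open_def)

lemma ad_ind_vertex:
  assumes v: "v \<in> V"
  shows "ad (ind q) (ind (v, []))
    = psc ((if path_end h q = v then 1 else 0) - (if fst q = v then 1 else 0)) (ind q)"
  unfolding ad_apply[OF vertex_in_P[OF v]] pmul_ind_vertex pmul_vertex_ind
  by (auto simp: fun_eq_iff)

lemma sum_D_arrow_arrow:
  assumes r0: "r0 \<in> E"
  shows "(\<Sum>j\<in>parallel_pairs. psc (c j) (D_arrow (fst j) (snd j) (ind (s r0, [r0]))))
     = comb (\<lambda>q. c (r0, q)) {q. (r0, q) \<in> parallel_pairs}"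
proof -
  have "(\<Sum>j\<in>parallel_pairs. psc (c j) (D_arrow (fst j) (snd j) (ind (s r0, [r0]))))
      = (\<Sum>j\<in>parallel_pairs. if fst j = r0 then psc (c j) (ind (snd j)) else 0)"
  proof (rule sum.cong[OF refl])
    fix j assume j: "j \<in> parallel_pairs"
    obtain r q where jv: "j = (r, q)" by (cases j)
    have "s r = fst q" using parallel_pairsD j jv by auto
    then show "psc (c j) (D_arrow (fst j) (snd j) (ind (s r0, [r0])))
        = (if fst j = r0 then psc (c j) (ind (snd j)) else 0)"
      unfolding jv by (simp add: D_arrow_arrow fun_eq_iff)
  qed
  also have "\<dots> = (\<Sum>j\<in>{j\<in>parallel_pairs. fst j = r0}. psc (c j) (ind (snd j)))"
    by (rule sum.inter_filter[symmetric]) (use finite_parallel_pairs in auto)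
  also have "\<dots> = (\<Sum>q\<in>{q. (r0, q) \<in> parallel_pairs}. psc (c (r0, q)) (ind q))"
  proof -
    have "{j\<in>parallel_pairs. fst j = r0} = (\<lambda>q. (r0, q)) ` {q. (r0, q) \<in> parallel_pairs}" by force
    moreover have "inj_on (\<lambda>q. (r0, q)) {q. (r0, q) \<in> parallel_pairs}" by (auto simp: inj_on_def)
    ultimately show ?thesis by (simp add: sum.reindex)
  qed
  finally show ?thesis by (simp add: comb_def)
qed

text \<open>Evaluating at the vertex h(q0) isolates the coefficient of ad(q0) (the D_arrow vanish
  on vertices); evaluating at an arrow r0 then isolates the coefficients of the D_arrow r0 q.\<close>

lemma D_arrow_ad_independent:
  assumes T: "(\<Sum>j\<in>parallel_pairs. Dsc (c1 j) (D_arrow (fst j) (snd j))) + (\<Sum>q\<in>Q_open. Dsc (c2 q) (ad (ind q)))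
    \<in> I_valued"
  shows "\<forall>q\<in>Q_open. c2 q = 0" "\<forall>j\<in>parallel_pairs. c1 j = 0"
proof -
  let ?T = "(\<Sum>j\<in>parallel_pairs. Dsc (c1 j) (D_arrow (fst j) (snd j))) + (\<Sum>q\<in>Q_open. Dsc (c2 q) (ad (ind q)))"
  have TI: "?T x \<in> I" if "x \<in> P" for x using T that unfolding I_valued_def by blast
  have T_apply: "?T x = (\<Sum>j\<in>parallel_pairs. psc (c1 j) (D_arrow (fst j) (snd j) x))
      + (\<Sum>q\<in>Q_open. psc (c2 q) (ad (ind q) x))" for x
    by (simp add: sum_fun_apply)
  show c2: "\<forall>q\<in>Q_open. c2 q = 0"
  proof
    fix q0 assume q0: "q0 \<in> Q_open"
    let ?v = "path_end h q0"
    have v: "?v \<in> V" using valid_path_end[OF Q_valid arrow_ends] q0 Q_open_subset by blast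
    have "?T (ind (?v, []))
        = comb (\<lambda>q. c2 q * ((if path_end h q = ?v then 1 else 0) - (if fst q = ?v then 1 else 0))) Q_open"
      unfolding T_apply ad_ind_vertex[OF v] D_arrow_vertex comb_def by (simp add: fun_eq_iff)
    then have "comb (\<lambda>q. c2 q * ((if path_end h q = ?v then 1 else 0) - (if fst q = ?v then 1 else 0)))
        Q_open \<in> I"
      using TI[OF vertex_in_P[OF v]] by simp
    from comb_in_I_coeff[OF Q_open_subset this q0] show "c2 q0 = 0" using q0 by (simp add: Q_open_iff)
  qed
  show "\<forall>j\<in>parallel_pairs. c1 j = 0"
  proof
    fix j0 assume j0: "j0 \<in> parallel_pairs"
    obtain r0 q0 where jv: "j0 = (r0, q0)" by (cases j0)
    have r0: "r0 \<in> E" using parallel_pairsD j0 jv by auto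
    have "?T (ind (s r0, [r0])) = comb (\<lambda>q. c1 (r0, q)) {q. (r0, q) \<in> parallel_pairs}"
      unfolding T_apply sum_D_arrow_arrow[OF r0] using c2 by (simp add: fun_eq_iff sum_fun_apply)
    then have "comb (\<lambda>q. c1 (r0, q)) {q. (r0, q) \<in> parallel_pairs} \<in> I"
      using TI[OF arrow_in_P[OF r0]] by simp
    moreover have "{q. (r0, q) \<in> parallel_pairs} \<subseteq> Q" using parallel_pairsD by blast
    ultimately show "c1 j0 = 0" using comb_in_I_coeff j0 jv by blast
  qed
qed

lemma mul_vertex_mod_I:
  assumes "a - comb c Q \<in> I" "a \<in> P" "v \<in> V"
  shows "mul a (ind (v, [])) - comb (\<lambda>q. if path_end h q = v then c q else 0) Q \<in> I"
  using pmul_cong_left[OF assms(1,2) comb_in_P vertex_in_P[OF assms(3)]]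
  by (simp add: comb_mul_vertex)

lemma vertex_mul_mod_I:
  assumes "a - comb c Q \<in> I" "a \<in> P" "u \<in> V"
  shows "mul (ind (u, [])) a - comb (\<lambda>q. if fst q = u then c q else 0) Q \<in> I"
  using pmul_cong_right[OF assms(1,2) comb_in_P vertex_in_P[OF assms(3)]]
  by (simp add: vertex_mul_comb)

text \<open>The Leibniz rule on the idempotent e_v = e_v e_v.\<close>

lemma Der_vertex_coeff:
  assumes D: "D \<in> DerS" and v: "v \<in> V" and c: "D (ind (v, [])) - comb c Q \<in> I"
    and q: "q \<in> Q" and cq: "c q \<noteq> 0"
  shows "path_end h q = v \<longleftrightarrow> fst q \<noteq> v"
proof -
  let ?X = "D (ind (v, []))"
  let ?M1 = "mul ?X (ind (v, []))" and ?M2 = "mul (ind (v, [])) ?X"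
  let ?R = "comb (\<lambda>q. if path_end h q = v then c q else 0) Q"
    and ?L = "comb (\<lambda>q. if fst q = v then c q else 0) Q"
  have XP: "?X \<in> P" using DerD(1)[OF D vertex_in_P[OF v]] .
  have "mul (ind (v, [])) (ind (v, [])) = ind (v, [])" by (simp add: pmul_vertex_ind)
  then have l: "?X - (?M1 + ?M2) \<in> I" using DerD(4)[OF D vertex_in_P[OF v] vertex_in_P[OF v]] by simp
  have "comb c Q - (?R + ?L) = - (?X - comb c Q) + (?X - (?M1 + ?M2)) + (?M1 - ?R) + (?M2 - ?L)"
    by (simp add: algebra_simps)
  also have "\<dots> \<in> I"
    by (intro I_add I_neg c l mul_vertex_mod_I[OF c XP v] vertex_mul_mod_I[OF c XP v])
  finally have "comb (\<lambda>q. c q - ((if path_end h q = v then c q else 0) + (if fst q = v then c q else 0))) Q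
      \<in> I"
    by (simp add: comb_add comb_diff)
  from Q_indep[OF this q] cq show ?thesis by (auto split: if_splits)
qed

text \<open>The Leibniz rule on e_u e_v = 0 for distinct vertices u and v.\<close>

lemma Der_vertex_coeff_distinct:
  assumes D: "D \<in> DerS" and u: "u \<in> V" and v: "v \<in> V" and uv: "u \<noteq> v"
    and cu: "D (ind (u, [])) - comb cu Q \<in> I" and cv: "D (ind (v, [])) - comb cv Q \<in> I"
    and q: "q \<in> Q"
  shows "(if path_end h q = v then cu q else 0) + (if fst q = u then cv q else 0) = 0"
proof -
  let ?M1 = "mul (D (ind (u, []))) (ind (v, []))" and ?M2 = "mul (ind (u, [])) (D (ind (v, [])))"
  let ?R = "comb (\<lambda>q. if path_end h q = v then cu q else 0) Q"
    and ?L = "comb (\<lambda>q. if fst q = u then cv q else 0) Q"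
  have uP: "D (ind (u, [])) \<in> P" and vP: "D (ind (v, [])) \<in> P"
    using DerD(1)[OF D] vertex_in_P u v by blast+
  have "mul (ind (u, [])) (ind (v, [])) = 0" using uv by (simp add: pmul_vertex_ind)
  then have l: "D 0 - (?M1 + ?M2) \<in> I" using DerD(4)[OF D vertex_in_P[OF u] vertex_in_P[OF v]] by simp
  have "?R + ?L = - (?M1 - ?R) - (?M2 - ?L) + D 0 - (D 0 - (?M1 + ?M2))"
    by (simp add: algebra_simps)
  also have "\<dots> \<in> I"
    by (intro I_add I_diff I_neg mul_vertex_mod_I[OF cu uP v] vertex_mul_mod_I[OF cv vP u]
        Der_zero[OF D] l)
  finally have "comb (\<lambda>q. (if path_end h q = v then cu q else 0) + (if fst q = u then cv q else 0)) Q
      \<in> I"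
    by (simp add: comb_add)
  from Q_indep[OF this q] show ?thesis .
qed

text \<open>Modulo I the value of a derivation at e_v is a combination of the basis paths q with
  h(q) = v or t(q) = v, with opposite coefficients at the two arrow_ends; hence it is the value at
  e_v of an inner derivation built from the non-closed basis paths.\<close>

lemma Der_vertex_correction:
  assumes D: "D \<in> DerS"
  obtains b where "\<And>v. v \<in> V \<Longrightarrow> D (ind (v, [])) - (\<Sum>q\<in>Q_open. psc (b q) (ad (ind q) (ind (v, [])))) \<in> I"
proof -
  have "\<forall>v\<in>V. \<exists>c. D (ind (v, [])) - comb c Q \<in> I"
    using Q_span DerD(1)[OF D] vertex_in_P by blast
  then obtain cv where cv: "\<And>v. v \<in> V \<Longrightarrow> D (ind (v, [])) - comb (cv v) Q \<in> I" by metis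
  define b where "b q = cv (path_end h q) q" for q
  have coef: "(if q \<in> Q_open then b q * ((if path_end h q = v then 1 else 0) - (if fst q = v then 1 else 0))
      else 0) = cv v q"
    if v: "v \<in> V" and q: "q \<in> Q" for v q
  proof -
    have u: "fst q \<in> V" and w: "path_end h q \<in> V"
      using valid_path_start[OF Q_valid[OF q]] valid_path_end[OF Q_valid[OF q] arrow_ends] .
    note ends_v = Der_vertex_coeff[OF D v cv[OF v] q]
    consider "v = path_end h q" "v \<noteq> fst q" | "v = fst q" "v \<noteq> path_end h q"
      | "cv v q = 0" "(v = fst q) = (v = path_end h q)"
      using ends_v by fastforce
    then show ?thesis
    proof cases
      case 1
      then show ?thesis using q by (simp add: Q_open_iff b_def)
    next
      case 2
      then have "cv (path_end h q) q + cv (fst q) q = 0"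
        using Der_vertex_coeff_distinct[OF D u w _ cv[OF u] cv[OF w] q] by (simp add: add.commute)
      then show ?thesis using 2 q by (simp add: Q_open_iff b_def add_eq_0_iff)
    next
      case 3
      then show ?thesis by (auto simp: Q_open_iff)
    qed
  qed
  show ?thesis
  proof (rule that)
    fix v assume v: "v \<in> V"
    have "(\<Sum>q\<in>Q_open. psc (b q) (ad (ind q) (ind (v, []))))
        = comb (\<lambda>q. b q * ((if path_end h q = v then 1 else 0) - (if fst q = v then 1 else 0))) Q_open"
      unfolding ad_ind_vertex[OF v] comb_def by simp
    also have "\<dots> = comb (cv v) Q"
      by (subst comb_extend[OF Q_open_subset], rule comb_cong) (use coef[OF v] in auto)
    finally show "D (ind (v, [])) - (\<Sum>q\<in>Q_open. psc (b q) (ad (ind q) (ind (v, [])))) \<in> I"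
      using cv[OF v] by simp
  qed
qed

text \<open>If D vanishes on the vertices modulo I, then e_t(e) e = e = e e_h(e) forces the value
  at the arrow e to be a combination of basis paths parallel to e.\<close>

lemma Der_arrow_coeff_parallel:
  assumes D: "D \<in> DerS" and Dv: "\<And>v. v \<in> V \<Longrightarrow> D (ind (v, [])) \<in> I" and e: "e \<in> E"
    and c: "D (ind (s e, [e])) - comb c Q \<in> I" and q: "q \<in> Q" and cq: "c q \<noteq> 0"
  shows "(e, q) \<in> parallel_pairs"
proof -
  let ?a = "ind (s e, [e])"
  have sV: "s e \<in> V" and hV: "h e \<in> V" using arrow_ends e by auto
  have aP: "?a \<in> P" and DaP: "D ?a \<in> P" using arrow_in_P[OF e] DerD(1)[OF D] by auto
  have "comb c Q - comb (\<lambda>q. if fst q = s e then c q else 0) Q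
      = - (D ?a - comb c Q)
        + (D (mul (ind (s e, [])) ?a) - (mul (D (ind (s e, []))) ?a + mul (ind (s e, [])) (D ?a)))
        + mul (D (ind (s e, []))) ?a
        + (mul (ind (s e, [])) (D ?a) - comb (\<lambda>q. if fst q = s e then c q else 0) Q)"
    by (simp add: pmul_vertex_ind algebra_simps)
  also have "\<dots> \<in> I"
    by (intro I_add I_neg c DerD(4)[OF D vertex_in_P[OF sV] aP] I_mul_right[OF Dv[OF sV] aP]
        vertex_mul_mod_I[OF c DaP sV])
  finally have "comb (\<lambda>q. c q - (if fst q = s e then c q else 0)) Q \<in> I" by (simp add: comb_diff)
  from Q_indep[OF this q] cq have start: "fst q = s e" by (auto split: if_splits)
  have "comb c Q - comb (\<lambda>q. if path_end h q = h e then c q else 0) Q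
      = - (D ?a - comb c Q)
        + (D (mul ?a (ind (h e, []))) - (mul (D ?a) (ind (h e, [])) + mul ?a (D (ind (h e, [])))))
        + mul ?a (D (ind (h e, [])))
        + (mul (D ?a) (ind (h e, [])) - comb (\<lambda>q. if path_end h q = h e then c q else 0) Q)"
    by (simp add: pmul_ind_vertex path_end_def algebra_simps)
  also have "\<dots> \<in> I"
    by (intro I_add I_neg c DerD(4)[OF D aP vertex_in_P[OF hV]] I_mul_left[OF Dv[OF hV] aP]
        mul_vertex_mod_I[OF c DaP hV])
  finally have "comb (\<lambda>q. c q - (if path_end h q = h e then c q else 0)) Q \<in> I"
    by (simp add: comb_diff)
  from Q_indep[OF this q] cq have "path_end h q = h e" by (auto split: if_splits)
  with start e q show ?thesis by (simp add: parallel_pairs_def path_start_def)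
qed

lemma Der_vanishing_on_vertices:
  assumes D: "D \<in> DerS" and Dv: "\<And>v. v \<in> V \<Longrightarrow> D (ind (v, [])) \<in> I"
  obtains c where "D - (\<Sum>j\<in>parallel_pairs. Dsc (c j) (D_arrow (fst j) (snd j))) \<in> Der_I"
proof -
  have "\<forall>e\<in>E. \<exists>c. D (ind (s e, [e])) - comb c Q \<in> I"
    using Q_span DerD(1)[OF D] arrow_in_P by blast
  then obtain ca where ca: "\<And>e. e \<in> E \<Longrightarrow> D (ind (s e, [e])) - comb (ca e) Q \<in> I" by metis
  define c where "c j = ca (fst j) (snd j)" for j
  define D' where "D' = D - (\<Sum>j\<in>parallel_pairs. Dsc (c j) (D_arrow (fst j) (snd j)))"
  have D'_apply: "D' x = D x - (\<Sum>j\<in>parallel_pairs. psc (c j) (D_arrow (fst j) (snd j) x))" for x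
    by (simp add: D'_def sum_fun_apply)
  have "D' \<in> DerS" unfolding D'_def
    by (intro DV.subspace_diff[OF Der_subspace D] DV.subspace_sum[OF Der_subspace]
        DV.subspace_scale[OF Der_subspace]) (auto intro: D_arrow_in_Der)
  moreover have "D' \<in> I_valued"
  proof (rule Der_I_valuedI[OF \<open>D' \<in> DerS\<close>])
    fix v assume v: "v \<in> V"
    show "D' (ind (v, [])) \<in> I" using Dv[OF v] by (simp add: D'_apply D_arrow_vertex)
  next
    fix e assume e: "e \<in> E"
    have "(\<Sum>j\<in>parallel_pairs. psc (c j) (D_arrow (fst j) (snd j) (ind (s e, [e])))) = comb (ca e) Q"
      unfolding sum_D_arrow_arrow[OF e]
      by (subst comb_extend, use parallel_pairsD in blast, rule comb_cong)
        (use Der_arrow_coeff_parallel[OF D Dv e ca[OF e]] in \<open>auto simp: c_def\<close>)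
    then show "D' (ind (s e, [e])) \<in> I" using ca[OF e] by (simp add: D'_apply)
  qed
  ultimately show ?thesis using that by (auto simp: D'_def Der_I_def)
qed

definition Der_basis :: "('e \<times> ('v,'e) path) + ('v,'e) path
    \<Rightarrow> (('v,'e) path \<Rightarrow> 'k) \<Rightarrow> (('v,'e) path \<Rightarrow> 'k)" where
  "Der_basis = case_sum (\<lambda>j. D_arrow (fst j) (snd j)) (\<lambda>q. ad (ind q))"

lemma sum_Der_basis:
  "(\<Sum>a\<in>parallel_pairs <+> Q_open. Dsc (c a) (Der_basis a))
    = (\<Sum>j\<in>parallel_pairs. Dsc (c (Inl j)) (D_arrow (fst j) (snd j))) + (\<Sum>q\<in>Q_open. Dsc (c (Inr q)) (ad (ind q)))"
  by (simp add: sum.Plus[OF finite_parallel_pairs finite_Q_open] Der_basis_def comp_def)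

lemma Der_basis_in_Der: "Der_basis ` (parallel_pairs <+> Q_open) \<subseteq> DerS"
  using D_arrow_in_Der ad_in_Der ind_in_pathalg Q_valid Q_open_subset
  by (fastforce simp: Der_basis_def)

lemma Der_span_mod: "DerS \<subseteq> DV.span_mod (Der_basis ` (parallel_pairs <+> Q_open)) Der_I"
proof
  fix D assume D: "D \<in> DerS"
  obtain b where b: "\<And>v. v \<in> V \<Longrightarrow> D (ind (v, [])) - (\<Sum>q\<in>Q_open. psc (b q) (ad (ind q) (ind (v, [])))) \<in> I"
    using Der_vertex_correction[OF D] by blast
  define D1 where "D1 = D - (\<Sum>q\<in>Q_open. Dsc (b q) (ad (ind q)))"
  have "D1 \<in> DerS" unfolding D1_def
    using Q_open_subset by (intro DV.subspace_diff[OF Der_subspace D] DV.subspace_sum[OF Der_subspace]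
        DV.subspace_scale[OF Der_subspace] ad_in_Der ind_in_pathalg Q_valid) auto
  moreover have "D1 (ind (v, [])) \<in> I" if "v \<in> V" for v
    using b[OF that] by (simp add: D1_def sum_fun_apply)
  ultimately obtain c where c: "D1 - (\<Sum>j\<in>parallel_pairs. Dsc (c j) (D_arrow (fst j) (snd j))) \<in> Der_I"
    using Der_vanishing_on_vertices by blast
  let ?c = "case_sum c b"
  have "D - (\<Sum>a\<in>parallel_pairs <+> Q_open. Dsc (?c a) (Der_basis a)) \<in> Der_I"
    using c unfolding sum_Der_basis D1_def by (simp add: algebra_simps)
  moreover have "(\<Sum>a\<in>parallel_pairs <+> Q_open. Dsc (?c a) (Der_basis a)) \<in> DV.span (Der_basis ` (parallel_pairs <+> Q_open))"
    by (intro DV.span_sum DV.span_scale DV.span_base) auto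
  ultimately show "D \<in> DV.span_mod (Der_basis ` (parallel_pairs <+> Q_open)) Der_I"
    unfolding DV.span_mod_def by blast
qed

lemma dim_Der: "qdim Dsc (+) 0 DerS Der_I = card parallel_pairs + card Q_open"
proof -
  have "qdim Dsc (+) 0 DerS Der_I = card (parallel_pairs <+> Q_open)"
  proof (rule DV.qdim_eq_card[OF Der_I_subspace _ Der_basis_in_Der _ Der_span_mod])
    show "finite (parallel_pairs <+> Q_open)" using finite_parallel_pairs finite_Q_open by simp
    fix c assume "(\<Sum>a\<in>parallel_pairs <+> Q_open. Dsc (c a) (Der_basis a)) \<in> Der_I"
    then have "(\<Sum>j\<in>parallel_pairs. Dsc (c (Inl j)) (D_arrow (fst j) (snd j)))
        + (\<Sum>q\<in>Q_open. Dsc (c (Inr q)) (ad (ind q))) \<in> I_valued"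
      unfolding sum_Der_basis Der_I_def by simp
    from D_arrow_ad_independent[OF this] show "\<forall>a\<in>parallel_pairs <+> Q_open. c a = 0" by auto
  qed
  then show ?thesis using finite_parallel_pairs finite_Q_open by (simp add: card_Plus)
qed

lemma dim_H1:
  "int (qdim Dsc (+) 0 DerS InnS) = int (card parallel_pairs) + int (qdim psc (+) 0 Zc I) - int (card (QC h Q))"
proof -
  have "qdim Dsc (+) 0 DerS Der_I = qdim Dsc (+) 0 DerS InnS + qdim Dsc (+) 0 InnS Der_I"
    using finite_parallel_pairs finite_Q_open
    by (intro DV.qdim_add[OF Der_I_subspace Inn_subspace Der_subspace Der_I_subset_Inn
          Inn_subset_Der _ Der_span_mod]) auto
  then show ?thesis using dim_Der dim_Inn dim_add_center dim_P card_QC_add_card_Q_open by linarith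
qed

end

theorem proposition3p4:
  fixes V :: "'v set" and E :: "'e set" and s h :: "'e \<Rightarrow> 'v"
    and I :: "(('v,'e) path \<Rightarrow> 'k::field) set" and Q :: "('v,'e) path set"
  assumes "finite V" and "finite E"
    and "\<forall>e\<in>E. s e \<in> V \<and> h e \<in> V"
    and "quiver_connected V E s h"
    and "two_sided_ideal V E s h I"
    and "I \<subseteq> arrow_ideal_sq V E s h"
    and "quot_fin_dim V E s h I"
    and "path_class_basis V E s h I Q"
  shows "int (H1_dim V E s h I)
           = int (card (B2 V E s h I Q)) + int (center_dim V E s h I) - int (card (QC h Q))"
proof -
  interpret quiver_quotient V E s h I Q
    by unfold_locales (use assms in auto)
  have "H1_dim V E s h I = qdim Dsc (+) 0 DerS InnS" by (simp add: H1_dim_def Dadd_eq Dzero_eq)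
  moreover have "center_dim V E s h I = qdim psc (+) 0 Zc I" by (simp add: center_dim_def padd_eq pzero_eq)
  ultimately show ?thesis using dim_H1 card_B2 by simp
qed

end
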